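(* Let $R\ge1$, let $\varphi:[0,1]\to[0,\infty)$ be smooth with $\operatorname{supp}\varphi\subset(0,1)$, and let $f:(h\mathbb Z)^d\times[0,1]\to\mathbb R$ satisfy $$\operatorname{supp}f\subset\Big\{(hj,t): 1\le\Big|\frac{hj}{R}+\varphi(t)e_1\Big|\le4\Big\}\cap\big((h\mathbb Z)^d\times(0,1)\big).$$ Let $\phi_j(t)=\alpha\big|\frac{hj}{R}+\varphi(t)e_1\big|^2$ with $\alpha>0$. Then there exist $h_0>0$ and $C>1$ such that $$\frac1{h^2}\sqrt{\sinh\frac{2\alpha h^2}{R^2}}\,\sinh\Big(\frac{2\alpha h}{R\sqrt d}\Big)\|f\|_{L^2([0,1];\ell^2)}+\frac{2}{h^2}\sqrt{\sinh\frac{2\alpha h^2}{R^2}}\Big(h^d\int_0^1\sum_{j\in\mathbb Z^d}\sum_{k=1}^d\Big|\frac{f_{j+e_k}-f_{j-e_k}}{2}\Big|^2dt\Big)^{1/2}\le C\big\|e^{\phi}(\partial_t-\Delta_{\mathrm d})(e^{-\phi}f)\big\|_{L^2([0,1];\ell^2)},$$ whenever $0<h<h_0$ and $\alpha,h,R$ satisfy $$\alpha\le c_\varphi\frac1{h^4}\sinh\Big(\frac{2\alpha h^2}{R^2}\Big)\sinh^2\Big(\frac{2\alpha h}{R\sqrt d}\Big)$$ for a constant $c_\varphi=c_\varphi(d,\|\varphi'\|_\infty,\|\varphi''\|_\infty)$, together with either $\alpha\ge cR^2$ in the case $\frac{\alpha h}{R}\le\frac1{10}$, or $1\le C'\frac1{Rh}e^{(2-\varepsilon)\frac{\alpha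 h}{R\sqrt d}}$ in the case $\frac{\alpha h}{R}\ge\frac{\sqrt d}{2}$; here $c,C'>0$ are suitable constants and $\varepsilon>0$ is a small universal constant with $h/R<\varepsilon/\sqrt d$.
   Context: Lattice functions are indexed by $j\in\mathbb Z^d$ with $f_j(t)=f(hj,t)$; $\Delta_{\mathrm d}f_j:=h^{-2}\sum_{k=1}^d(f_{j+e_k}-2f_j+f_{j-e_k})$; $\|f\|_{L^2([0,1];\ell^2)}=(h^d\int_0^1\sum_j|f_j(t)|^2dt)^{1/2}$; $e_1$ is the first unit vector and $|\cdot|$ is the Euclidean norm. *)

theory Defs
  imports "HOL-Analysis.Analysis"
begin

text \<open>Lattice points of Z^d are functions nat => int vanishing at indices >= d
  (coordinate k of the paper corresponds to index k-1, so e_1 is index 0).\<close>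

definition lat :: "nat \<Rightarrow> (nat \<Rightarrow> int) set" where
  "lat d = {j. \<forall>k\<ge>d. j k = 0}"

definition unitv :: "nat \<Rightarrow> nat \<Rightarrow> int" where
  "unitv k = (\<lambda>i. if i = k then 1 else 0)"

definition shift_plus :: "(nat \<Rightarrow> int) \<Rightarrow> nat \<Rightarrow> (nat \<Rightarrow> int)" where
  "shift_plus j k = (\<lambda>i. j i + unitv k i)"

definition shift_minus :: "(nat \<Rightarrow> int) \<Rightarrow> nat \<Rightarrow> (nat \<Rightarrow> int)" where
  "shift_minus j k = (\<lambda>i. j i - unitv k i)"

definition pnorm :: "nat \<Rightarrow> real \<Rightarrow> real \<Rightarrow> (real \<Rightarrow> real) \<Rightarrow> (nat \<Rightarrow> int) \<Rightarrow> real \<Rightarrow> real" where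
  "pnorm d h R vphi j t =
     sqrt (\<Sum>i<d. (h * real_of_int (j i) / R + (if i = 0 then vphi t else 0))\<^sup>2)"

definition weight :: "nat \<Rightarrow> real \<Rightarrow> real \<Rightarrow> real \<Rightarrow> (real \<Rightarrow> real) \<Rightarrow> (nat \<Rightarrow> int) \<Rightarrow> real \<Rightarrow> real" where
  "weight d h R \<alpha> vphi j t = \<alpha> * (pnorm d h R vphi j t)\<^sup>2"

definition dlap :: "nat \<Rightarrow> real \<Rightarrow> ((nat \<Rightarrow> int) \<Rightarrow> real \<Rightarrow> real) \<Rightarrow> (nat \<Rightarrow> int) \<Rightarrow> real \<Rightarrow> real" where
  "dlap d h u j t = (\<Sum>k<d. u (shift_plus j k) t - 2 * u j t + u (shift_minus j k) t) / h\<^sup>2"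

definition conj_op :: "nat \<Rightarrow> real \<Rightarrow> real \<Rightarrow> real \<Rightarrow> (real \<Rightarrow> real)
    \<Rightarrow> ((nat \<Rightarrow> int) \<Rightarrow> real \<Rightarrow> real) \<Rightarrow> (nat \<Rightarrow> int) \<Rightarrow> real \<Rightarrow> real" where
  "conj_op d h R \<alpha> vphi f j t =
     (let u = (\<lambda>i s. exp (- weight d h R \<alpha> vphi i s) * f i s)
      in exp (weight d h R \<alpha> vphi j t) * (deriv (u j) t - dlap d h u j t))"

definition L2l2 :: "nat \<Rightarrow> real \<Rightarrow> ((nat \<Rightarrow> int) \<Rightarrow> real \<Rightarrow> real) \<Rightarrow> real" where
  "L2l2 d h F = sqrt (h ^ d * integral {0..1} (\<lambda>t. \<Sum>\<^sub>\<infinity>j\<in>lat d. (F j t)\<^sup>2))"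

definition cgrad :: "nat \<Rightarrow> real \<Rightarrow> ((nat \<Rightarrow> int) \<Rightarrow> real \<Rightarrow> real) \<Rightarrow> real" where
  "cgrad d h f = sqrt (h ^ d * integral {0..1}
      (\<lambda>t. \<Sum>\<^sub>\<infinity>j\<in>lat d. \<Sum>k<d. ((f (shift_plus j k) t - f (shift_minus j k) t) / 2)\<^sup>2))"

definition smooth_fun :: "(real \<Rightarrow> real) \<Rightarrow> bool" where
  "smooth_fun g = (\<forall>n x. ((deriv ^^ n) g) differentiable (at x))"

end

theory Submission
  imports Defs
begin

text \<open>
  Conjugating the heat operator by the weight \<open>e\<^sup>\<phi>\<close> gives \<open>L = S + A\<close>, where \<open>S\<close> is symmetric and
  \<open>A\<close> antisymmetric for the \<open>\<ell>\<^sup>2\<close> pairing in space, so that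
  \<open>\<parallel>L f\<parallel>\<^sup>2 \<ge> 2\<langle>S f, A f\<rangle>\<close> at every time.  Writing \<open>e\<^sup>\<phi>\<close>-conjugated shifts through \<open>cosh\<close>
  and \<open>sinh\<close> of the weight increments, \<open>2\<langle>S f, A f\<rangle>\<close> is the time derivative of an
  energy (which integrates to zero because \<open>f\<close> vanishes near \<open>t = 0, 1\<close>), plus the
  commutator \<open>[S, A]\<close>, plus lower order terms.  Since \<open>\<phi>\<close> is quadratic in \<open>j\<close>, the
  commutator is computed exactly: it equals
  \<open>4 sinh(2\<alpha>h\<^sup>2/R\<^sup>2)/h\<^sup>4 (\<Sum>\<^sub>k \<parallel>sinh(\<partial>\<^sub>k\<phi>) f\<parallel>\<^sup>2 + \<parallel>(f\<^sub>j\<^sub>+\<^sub>e\<^sub>k - f\<^sub>j\<^sub>-\<^sub>e\<^sub>k)/2\<parallel>\<^sup>2)\<close>, and on the annulus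
  \<open>1 \<le> |hj/R + \<phi>(t)e\<^sub>1| \<le> 4\<close> some coordinate of the gradient of the weight is at least
  \<open>2\<alpha>h/(R\<surd>d)\<close>.  The lower order terms, which only involve \<open>\<phi>'\<close> and \<open>\<phi>''\<close>, are absorbed
  by half of the commutator exactly when \<open>\<alpha>\<close> satisfies the smallness condition with
  constant \<open>c\<^sub>\<phi>\<close>.  Integrating in time gives the estimate with \<open>C = 2\<close>.
\<close>

definition finsupp :: "('a \<Rightarrow> real) \<Rightarrow> bool" where
  "finsupp F \<longleftrightarrow> finite {j. F j \<noteq> 0}"

definition supp_sum :: "('a \<Rightarrow> real) \<Rightarrow> real" where
  "supp_sum F = sum F {j. F j \<noteq> 0}"

lemma supp_sum_eq_sum: "finite S \<Longrightarrow> {j. F j \<noteq> 0} \<subseteq> S \<Longrightarrow> supp_sum F = sum F S"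
  unfolding supp_sum_def by (rule sum.mono_neutral_left) auto

lemma finsupp_subset: "finite S \<Longrightarrow> (\<And>j. F j \<noteq> 0 \<Longrightarrow> j \<in> S) \<Longrightarrow> finsupp F"
  unfolding finsupp_def by (rule finite_subset[of _ S]) auto

lemma finsupp_add: "finsupp F \<Longrightarrow> finsupp G \<Longrightarrow> finsupp (\<lambda>j. F j + G j)"
  and finsupp_diff: "finsupp F \<Longrightarrow> finsupp G \<Longrightarrow> finsupp (\<lambda>j. F j - G j)"
  unfolding finsupp_def by (auto intro: finite_subset[of _ "{j. F j \<noteq> 0} \<union> {j. G j \<noteq> 0}"])

lemma finsupp_multL: "finsupp F \<Longrightarrow> finsupp (\<lambda>j. F j * G j)"
  and finsupp_multR: "finsupp G \<Longrightarrow> finsupp (\<lambda>j. F j * G j)"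
  and finsupp_divide: "finsupp F \<Longrightarrow> finsupp (\<lambda>j. F j / c)"
  unfolding finsupp_def by (auto elim!: rev_finite_subset)

lemma finsupp_uminus: "finsupp F \<Longrightarrow> finsupp (\<lambda>j. - F j)"
  and finsupp_power2: "finsupp F \<Longrightarrow> finsupp (\<lambda>j. (F j)\<^sup>2)"
  and finsupp_abs: "finsupp F \<Longrightarrow> finsupp (\<lambda>j. \<bar>F j\<bar>)"
  and finsupp_zero: "finsupp (\<lambda>j. 0)"
  unfolding finsupp_def by simp_all

lemma finsupp_sum: "finite K \<Longrightarrow> (\<And>k. k \<in> K \<Longrightarrow> finsupp (F k)) \<Longrightarrow> finsupp (\<lambda>j. \<Sum>k\<in>K. F k j)"
  by (induction K rule: finite_induct) (simp_all add: finsupp_zero finsupp_add)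

lemmas finsupp_intros [simp] = finsupp_add finsupp_diff finsupp_multL finsupp_multR finsupp_divide
  finsupp_uminus finsupp_power2 finsupp_abs finsupp_zero

lemma supp_sum_add: "finsupp F \<Longrightarrow> finsupp G \<Longrightarrow> supp_sum (\<lambda>j. F j + G j) = supp_sum F + supp_sum G"
  and supp_sum_diff: "finsupp F \<Longrightarrow> finsupp G \<Longrightarrow> supp_sum (\<lambda>j. F j - G j) = supp_sum F - supp_sum G"
proof -
  assume "finsupp F" "finsupp G"
  then have fin: "finite ({j. F j \<noteq> 0} \<union> {j. G j \<noteq> 0})" by (simp add: finsupp_def)
  show "supp_sum (\<lambda>j. F j + G j) = supp_sum F + supp_sum G"
    by (subst (1 2 3) supp_sum_eq_sum[OF fin]) (auto simp: sum.distrib)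
  show "supp_sum (\<lambda>j. F j - G j) = supp_sum F - supp_sum G"
    by (subst (1 2 3) supp_sum_eq_sum[OF fin]) (auto simp: sum_subtractf)
qed

lemma supp_sum_cmult: "supp_sum (\<lambda>j. c * F j) = c * supp_sum F"
  by (cases "c = 0") (simp_all add: supp_sum_def sum_distrib_left)

lemma supp_sum_divide: "supp_sum (\<lambda>j. F j / c) = supp_sum F / c"
  using supp_sum_cmult[of "1/c" F] by (simp add: divide_inverse mult.commute)

lemma supp_sum_uminus: "supp_sum (\<lambda>j. - F j) = - supp_sum F"
  using supp_sum_cmult[of "-1" F] by simp

lemma supp_sum_zero [simp]: "supp_sum (\<lambda>j. 0) = 0"
  by (simp add: supp_sum_def)

lemma supp_sum_sum: "finite K \<Longrightarrow> (\<And>k. k \<in> K \<Longrightarrow> finsupp (F k)) \<Longrightarrow>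
    supp_sum (\<lambda>j. \<Sum>k\<in>K. F k j) = (\<Sum>k\<in>K. supp_sum (F k))"
  by (induction K rule: finite_induct) (simp_all add: supp_sum_add finsupp_sum)

lemma supp_sum_mono: "finsupp F \<Longrightarrow> finsupp G \<Longrightarrow> (\<And>j. F j \<le> G j) \<Longrightarrow> supp_sum F \<le> supp_sum G"
proof -
  assume "finsupp F" "finsupp G" and le: "\<And>j. F j \<le> G j"
  then have fin: "finite ({j. F j \<noteq> 0} \<union> {j. G j \<noteq> 0})" by (simp add: finsupp_def)
  show ?thesis
    by (subst (1 2) supp_sum_eq_sum[OF fin]) (auto intro: sum_mono le)
qed

lemma supp_sum_nonneg: "(\<And>j. 0 \<le> F j) \<Longrightarrow> 0 \<le> supp_sum F"
  unfolding supp_sum_def by (rule sum_nonneg) auto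

lemma abs_supp_sum_le: "\<bar>supp_sum F\<bar> \<le> supp_sum (\<lambda>j. \<bar>F j\<bar>)"
  unfolding supp_sum_def by (simp add: sum_abs)

lemma supp_sum_reindex:
  assumes "\<And>j. g (h j) = j" "\<And>j. h (g j) = j"
  shows "supp_sum (\<lambda>j. F (h j)) = supp_sum F"
proof -
  have "{j. F (h j) \<noteq> 0} = g ` {j. F j \<noteq> 0}"
    using assms by (auto intro: image_eqI[where x="h _"])
  moreover have "inj g" using assms by (metis injI)
  ultimately show ?thesis
    unfolding supp_sum_def using assms by (simp add: sum.reindex inj_on_subset[of g UNIV])
qed

lemma infsum_eq_supp_sum: "finsupp F \<Longrightarrow> (\<And>j. F j \<noteq> 0 \<Longrightarrow> j \<in> A) \<Longrightarrow> infsum F A = supp_sum F"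
  unfolding finsupp_def supp_sum_def
  by (subst infsum_cong_neutral[where T="{j. F j \<noteq> 0}" and g=F]) auto

definition l2_inner :: "('a \<Rightarrow> real) \<Rightarrow> ('a \<Rightarrow> real) \<Rightarrow> real" where
  "l2_inner F G = supp_sum (\<lambda>j. F j * G j)"

lemma l2_inner_commute: "l2_inner F G = l2_inner G F"
  unfolding l2_inner_def by (simp add: mult.commute)

lemma l2_inner_diff_right: "finsupp F \<Longrightarrow> l2_inner F (\<lambda>j. X j - Y j) = l2_inner F X - l2_inner F Y"
  unfolding l2_inner_def by (simp add: right_diff_distrib supp_sum_diff)

lemma l2_inner_sum_left: "finite K \<Longrightarrow> (\<And>k. k \<in> K \<Longrightarrow> finsupp (X k)) \<Longrightarrow>
    l2_inner (\<lambda>j. \<Sum>k\<in>K. X k j) G = (\<Sum>k\<in>K. l2_inner (X k) G)"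
  unfolding l2_inner_def sum_distrib_right by (rule supp_sum_sum) auto

lemma l2_inner_sum_right: "finite K \<Longrightarrow> (\<And>k. k \<in> K \<Longrightarrow> finsupp (X k)) \<Longrightarrow>
    l2_inner G (\<lambda>j. \<Sum>k\<in>K. X k j) = (\<Sum>k\<in>K. l2_inner G (X k))"
  using l2_inner_sum_left[of K X G] by (simp add: l2_inner_commute)

lemma has_real_derivative_l2_inner:
  assumes S: "finite S" and support: "\<And>s j. X s j \<noteq> 0 \<Longrightarrow> j \<in> S"
    and X': "\<And>j. ((\<lambda>s. X s j) has_real_derivative X' j) (at t)"
    and Y': "\<And>j. ((\<lambda>s. Y s j) has_real_derivative Y' j) (at t)"
  shows "((\<lambda>s. l2_inner (X s) (Y s)) has_real_derivative l2_inner X' (Y t) + l2_inner (X t) Y') (at t)"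
proof -
  have "X' j = 0" if "j \<notin> S" for j
  proof -
    have "(\<lambda>s. X s j) = (\<lambda>s. 0)" using support that by blast
    then show ?thesis using X'[of j] by (simp add: DERIV_unique[OF _ DERIV_const])
  qed
  then have "l2_inner X' (Y t) = (\<Sum>j\<in>S. X' j * Y t j)"
    unfolding l2_inner_def by (intro supp_sum_eq_sum[OF S] subsetI) auto
  moreover have "l2_inner (X t) Y' = (\<Sum>j\<in>S. X t j * Y' j)"
    unfolding l2_inner_def using support by (intro supp_sum_eq_sum[OF S] subsetI) auto
  moreover have "l2_inner (X s) (Y s) = (\<Sum>j\<in>S. X s j * Y s j)" for s
    unfolding l2_inner_def using support by (intro supp_sum_eq_sum[OF S] subsetI) auto
  moreover have "((\<lambda>s. X s j * Y s j) has_real_derivative X' j * Y t j + X t j * Y' j) (at t)" for j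
    using DERIV_mult[OF X' Y'] by (simp add: algebra_simps)
  ultimately show ?thesis
    by (simp only: sum.distrib[symmetric]) (rule DERIV_sum)
qed

lemma shift_plus_apply: "shift_plus j k i = j i + (if i = k then 1 else 0)"
  and shift_minus_apply: "shift_minus j k i = j i - (if i = k then 1 else 0)"
  by (auto simp: shift_plus_def shift_minus_def unitv_def)

lemma shift_minus_plus [simp]: "shift_minus (shift_plus j k) k = j"
  and shift_plus_minus [simp]: "shift_plus (shift_minus j k) k = j"
  by (auto simp: shift_plus_def shift_minus_def)

lemma shift_commute:
  "shift_plus (shift_plus j k) l = shift_plus (shift_plus j l) k"
  "shift_minus (shift_plus j k) l = shift_plus (shift_minus j l) k"
  "shift_minus (shift_minus j k) l = shift_minus (shift_minus j l) k"
  by (auto simp: shift_plus_def shift_minus_def)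

lemma shift_plus_notin_lat: "j \<notin> lat d \<Longrightarrow> k < d \<Longrightarrow> shift_plus j k \<notin> lat d"
  and shift_minus_notin_lat: "j \<notin> lat d \<Longrightarrow> k < d \<Longrightarrow> shift_minus j k \<notin> lat d"
  by (auto simp: lat_def shift_plus_apply shift_minus_apply)

lemma finsupp_shift_plus [simp]: "finsupp F \<Longrightarrow> finsupp (\<lambda>j. F (shift_plus j k))"
  unfolding finsupp_def
  by (rule finite_subset[of _ "(\<lambda>j. shift_minus j k) ` {j. F j \<noteq> 0}"])
     (auto intro: image_eqI[where x="shift_plus _ k"])

lemma finsupp_shift_minus [simp]: "finsupp F \<Longrightarrow> finsupp (\<lambda>j. F (shift_minus j k))"
  unfolding finsupp_def
  by (rule finite_subset[of _ "(\<lambda>j. shift_plus j k) ` {j. F j \<noteq> 0}"])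
     (auto intro: image_eqI[where x="shift_minus _ k"])

lemma supp_sum_shift_plus: "supp_sum (\<lambda>j. F (shift_plus j k)) = supp_sum F"
  and supp_sum_shift_minus: "supp_sum (\<lambda>j. F (shift_minus j k)) = supp_sum F"
  by (rule supp_sum_reindex[of "\<lambda>j. shift_minus j k"]; simp)
     (rule supp_sum_reindex[of "\<lambda>j. shift_plus j k"]; simp)


section \<open>The weight and its increments\<close>

locale lattice_weight =
  fixes d :: nat and h R \<alpha> :: real and \<phi> \<phi>' \<phi>'' :: "real \<Rightarrow> real"
  assumes d_pos: "0 < d" and h_pos: "0 < h" and R_pos: "0 < R" and \<alpha>_pos: "0 < \<alpha>"
    and \<phi>_deriv: "\<And>t. (\<phi> has_real_derivative \<phi>' t) (at t)"
    and \<phi>'_deriv: "\<And>t. (\<phi>' has_real_derivative \<phi>'' t) (at t)"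
begin

definition coord :: "nat \<Rightarrow> (nat \<Rightarrow> int) \<Rightarrow> real \<Rightarrow> real" where
  "coord i j t = h * real_of_int (j i) / R + (if i = 0 then \<phi> t else 0)"

definition w :: "(nat \<Rightarrow> int) \<Rightarrow> real \<Rightarrow> real" where
  "w j t = \<alpha> * (\<Sum>i<d. (coord i j t)\<^sup>2)"

definition \<delta> :: real where
  "\<delta> = \<alpha> * h\<^sup>2 / R\<^sup>2"

definition grad_w :: "nat \<Rightarrow> (nat \<Rightarrow> int) \<Rightarrow> real \<Rightarrow> real" where
  "grad_w k j t = 2 * \<alpha> * h * coord k j t / R"

definition incr :: "nat \<Rightarrow> (nat \<Rightarrow> int) \<Rightarrow> real \<Rightarrow> real" where
  "incr k j t = \<delta> + grad_w k j t"

definition w' :: "(nat \<Rightarrow> int) \<Rightarrow> real \<Rightarrow> real" where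
  "w' j t = 2 * \<alpha> * coord 0 j t * \<phi>' t"

definition w'' :: "(nat \<Rightarrow> int) \<Rightarrow> real \<Rightarrow> real" where
  "w'' j t = 2 * \<alpha> * ((\<phi>' t)\<^sup>2 + coord 0 j t * \<phi>'' t)"

definition incr' :: "real \<Rightarrow> real" where
  "incr' t = 2 * \<alpha> * h * \<phi>' t / R"

lemma \<delta>_pos: "0 < \<delta>"
  using h_pos R_pos \<alpha>_pos by (simp add: \<delta>_def)

lemma weight_eq_w: "weight d h R \<alpha> \<phi> j t = w j t"
  by (simp add: weight_def pnorm_def w_def coord_def sum_nonneg)

lemma pnorm_eq: "pnorm d h R \<phi> j t = sqrt (\<Sum>i<d. (coord i j t)\<^sup>2)"
  by (simp add: pnorm_def coord_def)

lemma coord_shift_plus: "coord i (shift_plus j k) t = coord i j t + (if i = k then h / R else 0)"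
  and coord_shift_minus: "coord i (shift_minus j k) t = coord i j t - (if i = k then h / R else 0)"
  by (simp_all add: coord_def shift_plus_apply shift_minus_apply distrib_left right_diff_distrib
      add_divide_distrib diff_divide_distrib)

lemma w_shift_plus:
  assumes "k < d"
  shows "w (shift_plus j k) t = w j t + incr k j t"
proof -
  have "(\<Sum>i<d. (coord i (shift_plus j k) t)\<^sup>2) =
        (\<Sum>i<d. (coord i j t)\<^sup>2 + (if i = k then 2 * coord k j t * (h/R) + (h/R)\<^sup>2 else 0))"
    by (rule sum.cong) (auto simp: coord_shift_plus power2_eq_square algebra_simps)
  also have "\<dots> = (\<Sum>i<d. (coord i j t)\<^sup>2) + (2 * coord k j t * (h/R) + (h/R)\<^sup>2)"
    using assms by (simp add: sum.distrib)
  finally show ?thesis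
    by (simp add: w_def incr_def \<delta>_def grad_w_def power_divide algebra_simps)
qed

lemma w_shift_minus: "k < d \<Longrightarrow> w (shift_minus j k) t = w j t - incr k (shift_minus j k) t"
  using w_shift_plus[of k "shift_minus j k" t] by simp

lemma incr_shift_plus: "incr k (shift_plus j l) t = incr k j t + (if k = l then 2 * \<delta> else 0)"
  and incr_shift_minus: "incr k (shift_minus j l) t = incr k j t - (if k = l then 2 * \<delta> else 0)"
  using R_pos by (auto simp: incr_def grad_w_def coord_shift_plus coord_shift_minus \<delta>_def
      power2_eq_square field_simps)

lemma coord_deriv: "((\<lambda>t. coord i j t) has_real_derivative (if i = 0 then \<phi>' t else 0)) (at t)"
  unfolding coord_def by (auto intro!: derivative_eq_intros \<phi>_deriv)

lemma w_deriv: "((\<lambda>t. w j t) has_real_derivative w' j t) (at t)"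
proof -
  have "((\<lambda>t. \<alpha> * (\<Sum>i<d. coord i j t * coord i j t)) has_real_derivative
      \<alpha> * (\<Sum>i<d. coord i j t * (if i = 0 then \<phi>' t else 0) + (if i = 0 then \<phi>' t else 0) * coord i j t))
      (at t)"
    by (intro DERIV_cmult DERIV_sum DERIV_mult' coord_deriv)
  moreover have "(\<Sum>i<d. coord i j t * (if i = 0 then \<phi>' t else 0) + (if i = 0 then \<phi>' t else 0) * coord i j t)
      = (\<Sum>i<d. if i = 0 then 2 * coord 0 j t * \<phi>' t else 0)"
    by (rule sum.cong) auto
  ultimately have "((\<lambda>t. \<alpha> * (\<Sum>i<d. coord i j t * coord i j t)) has_real_derivative
      \<alpha> * (2 * coord 0 j t * \<phi>' t)) (at t)"
    using d_pos by simp
  then show ?thesis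
    by (simp add: w_def[abs_def] w'_def power2_eq_square algebra_simps)
qed

lemma w'_deriv: "((\<lambda>t. w' j t) has_real_derivative w'' j t) (at t)"
  using DERIV_cmult[OF DERIV_mult'[OF coord_deriv[of 0 j] \<phi>'_deriv], of "2 * \<alpha>"]
  by (simp add: w'_def w''_def power2_eq_square algebra_simps)

lemma incr_deriv: "((\<lambda>t. incr k j t) has_real_derivative (if k = 0 then incr' t else 0)) (at t)"
  using DERIV_add[OF DERIV_const DERIV_cmult[OF coord_deriv], of \<delta> "2 * \<alpha> * h / R" k j]
  by (cases "k = 0") (simp_all add: incr_def grad_w_def incr'_def)

lemma cosh_incr_deriv:
  "((\<lambda>t. cosh (incr k j t)) has_real_derivative (if k = 0 then incr' t * sinh (incr k j t) else 0)) (at t)"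
proof -
  have "((\<lambda>t. cosh (incr k j t)) has_real_derivative sinh (incr k j t) * (if k = 0 then incr' t else 0)) (at t)"
    by (rule DERIV_chain'[OF incr_deriv]) (rule has_field_derivative_cosh[OF DERIV_ident, simplified])
  then show ?thesis by (cases "k = 0") (simp_all add: mult.commute)
qed

end

section \<open>Symmetric and antisymmetric parts of the conjugated Laplacian\<close>

lemma sinh_cosh_commutator_identity:
  fixes x a A B C :: real
  shows "cosh x * (- sinh (x + 2*a) * A + sinh x * B)
      + cosh (x - 2*a) * (- sinh (x - 2*a) * B + sinh (x - 2*a - 2*a) * C)
    - (- sinh x * (cosh (x + 2*a) * A + cosh x * B)
      + sinh (x - 2*a) * (cosh (x - 2*a) * B + cosh (x - 2*a - 2*a) * C))
    = sinh (2*a) * (2 * cosh (2*(x - a)) * B - A - C)"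
proof -
  define u v where "u = exp x" and "v = exp a"
  have pos: "u > 0" "v > 0" by (auto simp: u_def v_def)
  have e: "exp (x + 2*a) = u * v * v" "exp (-(x+2*a)) = 1/(u * v * v)"
    "exp (x - 2*a) = u/(v * v)" "exp (-(x-2*a)) = v * v/u"
    "exp (x - 2*a - 2*a) = u/(v * v * v * v)" "exp (-(x - 2*a - 2*a)) = v * v * v * v/u"
    "exp (2*a) = v * v" "exp(-(2*a)) = 1/(v * v)"
    "exp (2*(x-a)) = u * u/(v * v)" "exp (-(2*(x-a))) = v * v/(u * u)"
    "exp x = u" "exp (-x) = 1/u"
    by (simp_all add: u_def v_def exp_add exp_diff exp_minus field_simps
        flip: exp_add mult_2 mult_2_right)
  show ?thesis
    unfolding sinh_def cosh_def e using pos by (simp add: field_simps)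
qed

context lattice_weight
begin

text \<open>Conjugation by the weight multiplies \<open>f (j + e\<^sub>k)\<close> by \<open>exp (- incr k j t)\<close> and
  \<open>f (j - e\<^sub>k)\<close> by \<open>exp (incr k (j - e\<^sub>k) t)\<close>; writing \<open>exp (\<plusminus>x) = cosh x \<plusminus> sinh x\<close> splits the
  conjugated Laplacian into a symmetric and an antisymmetric part.\<close>
definition sym_shift :: "nat \<Rightarrow> real \<Rightarrow> ((nat \<Rightarrow> int) \<Rightarrow> real) \<Rightarrow> (nat \<Rightarrow> int) \<Rightarrow> real" where
  "sym_shift k t F j =
     cosh (incr k j t) * F (shift_plus j k) + cosh (incr k (shift_minus j k) t) * F (shift_minus j k)"

definition skew_shift :: "nat \<Rightarrow> real \<Rightarrow> ((nat \<Rightarrow> int) \<Rightarrow> real) \<Rightarrow> (nat \<Rightarrow> int) \<Rightarrow> real" where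
  "skew_shift k t F j =
     - sinh (incr k j t) * F (shift_plus j k) + sinh (incr k (shift_minus j k) t) * F (shift_minus j k)"

definition Sym :: "real \<Rightarrow> ((nat \<Rightarrow> int) \<Rightarrow> real) \<Rightarrow> (nat \<Rightarrow> int) \<Rightarrow> real" where
  "Sym t F j = (\<Sum>k<d. sym_shift k t F j)"

definition Skew :: "real \<Rightarrow> ((nat \<Rightarrow> int) \<Rightarrow> real) \<Rightarrow> (nat \<Rightarrow> int) \<Rightarrow> real" where
  "Skew t F j = (\<Sum>k<d. skew_shift k t F j)"

lemma finsupp_sym_shift [simp]: "finsupp F \<Longrightarrow> finsupp (sym_shift k t F)"
  and finsupp_skew_shift [simp]: "finsupp F \<Longrightarrow> finsupp (skew_shift k t F)"
  unfolding sym_shift_def[abs_def] skew_shift_def[abs_def] by simp_all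

lemma finsupp_Sym [simp]: "finsupp F \<Longrightarrow> finsupp (Sym t F)"
  and finsupp_Skew [simp]: "finsupp F \<Longrightarrow> finsupp (Skew t F)"
  unfolding Sym_def[abs_def] Skew_def[abs_def] by (simp_all add: finsupp_sum)

lemma l2_inner_sym_shift:
  assumes "finsupp F" "finsupp G"
  shows "l2_inner (sym_shift k t F) G = l2_inner F (sym_shift k t G)"
proof -
  have "l2_inner (sym_shift k t F) G
      = supp_sum (\<lambda>j. cosh (incr k j t) * F (shift_plus j k) * G j)
      + supp_sum (\<lambda>j. cosh (incr k (shift_minus j k) t) * F (shift_minus j k) * G j)"
    unfolding l2_inner_def sym_shift_def using assms by (simp add: supp_sum_add algebra_simps)
  also have "\<dots> = supp_sum (\<lambda>j. F j * (cosh (incr k (shift_minus j k) t) * G (shift_minus j k)))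
      + supp_sum (\<lambda>j. F j * (cosh (incr k j t) * G (shift_plus j k)))"
    using supp_sum_shift_minus[of "\<lambda>j. cosh (incr k j t) * F (shift_plus j k) * G j" k]
      supp_sum_shift_plus[of "\<lambda>j. cosh (incr k (shift_minus j k) t) * F (shift_minus j k) * G j" k]
    by (simp add: mult_ac)
  also have "\<dots> = l2_inner F (sym_shift k t G)"
    unfolding l2_inner_def sym_shift_def using assms by (simp add: supp_sum_add algebra_simps)
  finally show ?thesis .
qed

lemma l2_inner_skew_shift:
  assumes "finsupp F" "finsupp G"
  shows "l2_inner (skew_shift k t F) G = - l2_inner F (skew_shift k t G)"
proof -
  have "l2_inner (skew_shift k t F) G
      = supp_sum (\<lambda>j. - (sinh (incr k j t) * F (shift_plus j k) * G j)
          + sinh (incr k (shift_minus j k) t) * F (shift_minus j k) * G j)"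
    unfolding l2_inner_def skew_shift_def by (simp add: algebra_simps)
  also have "\<dots> = - supp_sum (\<lambda>j. sinh (incr k j t) * F (shift_plus j k) * G j)
      + supp_sum (\<lambda>j. sinh (incr k (shift_minus j k) t) * F (shift_minus j k) * G j)"
    using assms by (simp add: supp_sum_add supp_sum_diff supp_sum_uminus)
  also have "\<dots> = - supp_sum (\<lambda>j. F j * (sinh (incr k (shift_minus j k) t) * G (shift_minus j k)))
      + supp_sum (\<lambda>j. F j * (sinh (incr k j t) * G (shift_plus j k)))"
    using supp_sum_shift_minus[of "\<lambda>j. sinh (incr k j t) * F (shift_plus j k) * G j" k]
      supp_sum_shift_plus[of "\<lambda>j. sinh (incr k (shift_minus j k) t) * F (shift_minus j k) * G j" k]
    by (simp add: mult_ac)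
  also have "\<dots> = - supp_sum (\<lambda>j. - (F j * (sinh (incr k j t) * G (shift_plus j k)))
      + F j * (sinh (incr k (shift_minus j k) t) * G (shift_minus j k)))"
    using assms by (simp add: supp_sum_add supp_sum_diff supp_sum_uminus)
  also have "\<dots> = - l2_inner F (skew_shift k t G)"
    unfolding l2_inner_def skew_shift_def by (simp add: algebra_simps)
  finally show ?thesis .
qed

lemma l2_inner_Sym: "finsupp F \<Longrightarrow> finsupp G \<Longrightarrow> l2_inner (Sym t F) G = l2_inner F (Sym t G)"
  unfolding Sym_def[abs_def] by (simp add: l2_inner_sum_left l2_inner_sum_right l2_inner_sym_shift)

lemma sym_skew_shift_commute:
  "k \<noteq> l \<Longrightarrow> sym_shift k t (skew_shift l t F) j = skew_shift l t (sym_shift k t F) j"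
  by (simp add: sym_shift_def skew_shift_def incr_shift_plus incr_shift_minus shift_commute
      algebra_simps)

text \<open>The weight is quadratic in \<open>j\<close>, so along direction \<open>k\<close> the increments form an arithmetic
  progression with step \<open>2\<delta>\<close>; this makes the commutator a second order difference operator.\<close>
lemma sym_skew_shift_commutator:
  "sym_shift k t (skew_shift k t F) j - skew_shift k t (sym_shift k t F) j =
   sinh (2 * \<delta>) * (2 * cosh (2 * grad_w k j t) * F j - F (shift_plus (shift_plus j k) k)
     - F (shift_minus (shift_minus j k) k))"
proof -
  have "grad_w k j t = incr k j t - \<delta>" by (simp add: incr_def)
  then show ?thesis
    using sinh_cosh_commutator_identity[of "incr k j t" \<delta> "F (shift_plus (shift_plus j k) k)" "F j"
        "F (shift_minus (shift_minus j k) k)"]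
    by (simp add: sym_shift_def skew_shift_def incr_shift_plus incr_shift_minus)
qed

lemma l2_inner_sym_skew_commutator:
  assumes F: "finsupp F"
  shows "l2_inner F (\<lambda>j. sym_shift k t (skew_shift k t F) j - skew_shift k t (sym_shift k t F) j) =
    4 * sinh (2 * \<delta>) * (supp_sum (\<lambda>j. (sinh (grad_w k j t))\<^sup>2 * (F j)\<^sup>2)
      + supp_sum (\<lambda>j. ((F (shift_plus j k) - F (shift_minus j k)) / 2)\<^sup>2))"
proof -
  define P where "P = supp_sum (\<lambda>j. F (shift_plus j k) * F (shift_minus j k))"
  have P_plus: "supp_sum (\<lambda>j. F j * F (shift_plus (shift_plus j k) k)) = P"
    using supp_sum_shift_minus[of "\<lambda>j. F j * F (shift_plus (shift_plus j k) k)" k]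
    by (simp add: P_def mult.commute)
  have P_minus: "supp_sum (\<lambda>j. F j * F (shift_minus (shift_minus j k) k)) = P"
    using supp_sum_shift_plus[of "\<lambda>j. F j * F (shift_minus (shift_minus j k) k)" k] by (simp add: P_def)
  have cosh_eq: "cosh (2 * x) = 1 + 2 * (sinh x)\<^sup>2" for x :: real
    by (simp add: cosh_double cosh_square_eq)
  have "l2_inner F (\<lambda>j. sym_shift k t (skew_shift k t F) j - skew_shift k t (sym_shift k t F) j) =
      supp_sum (\<lambda>j. sinh (2 * \<delta>) * (2 * (F j)\<^sup>2 + 4 * ((sinh (grad_w k j t))\<^sup>2 * (F j)\<^sup>2)
        - F j * F (shift_plus (shift_plus j k) k) - F j * F (shift_minus (shift_minus j k) k)))"
    unfolding l2_inner_def sym_skew_shift_commutator cosh_eq by (simp add: algebra_simps power2_eq_square)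
  also have "\<dots> = sinh (2 * \<delta>) * (2 * supp_sum (\<lambda>j. (F j)\<^sup>2)
      + 4 * supp_sum (\<lambda>j. (sinh (grad_w k j t))\<^sup>2 * (F j)\<^sup>2) - P - P)"
    using F by (simp add: supp_sum_cmult supp_sum_add supp_sum_diff P_plus P_minus)
  finally have commutator: "l2_inner F (\<lambda>j. sym_shift k t (skew_shift k t F) j - skew_shift k t (sym_shift k t F) j)
    = sinh (2 * \<delta>) * (2 * supp_sum (\<lambda>j. (F j)\<^sup>2)
      + 4 * supp_sum (\<lambda>j. (sinh (grad_w k j t))\<^sup>2 * (F j)\<^sup>2) - P - P)" .
  have "supp_sum (\<lambda>j. ((F (shift_plus j k) - F (shift_minus j k)) / 2)\<^sup>2) =
      (supp_sum (\<lambda>j. (F (shift_plus j k))\<^sup>2) + supp_sum (\<lambda>j. (F (shift_minus j k))\<^sup>2) - 2 * P) / 4"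
    unfolding P_def using F
    by (simp add: power_divide power2_diff supp_sum_divide supp_sum_cmult supp_sum_add supp_sum_diff mult.assoc)
  also have "\<dots> = (2 * supp_sum (\<lambda>j. (F j)\<^sup>2) - 2 * P) / 4"
    by (simp add: supp_sum_shift_plus[of "\<lambda>j. (F j)\<^sup>2"] supp_sum_shift_minus[of "\<lambda>j. (F j)\<^sup>2"])
  finally have diff: "supp_sum (\<lambda>j. ((F (shift_plus j k) - F (shift_minus j k)) / 2)\<^sup>2)
    = (2 * supp_sum (\<lambda>j. (F j)\<^sup>2) - 2 * P) / 4" .
  show ?thesis unfolding commutator diff by (simp add: field_simps)
qed

lemma twice_l2_inner_Sym_Skew:
  assumes F: "finsupp F"
  shows "2 * l2_inner (Sym t F) (Skew t F) =
    4 * sinh (2 * \<delta>) * (\<Sum>k<d. supp_sum (\<lambda>j. (sinh (grad_w k j t))\<^sup>2 * (F j)\<^sup>2)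
      + supp_sum (\<lambda>j. ((F (shift_plus j k) - F (shift_minus j k)) / 2)\<^sup>2))"
proof -
  have commutator: "2 * l2_inner (sym_shift k t F) (skew_shift l t F) =
      l2_inner F (\<lambda>j. sym_shift k t (skew_shift l t F) j - skew_shift l t (sym_shift k t F) j)" for k l
  proof -
    have "l2_inner (sym_shift k t F) (skew_shift l t F) = l2_inner F (sym_shift k t (skew_shift l t F))"
      using F by (simp add: l2_inner_sym_shift)
    moreover have "l2_inner (sym_shift k t F) (skew_shift l t F) = - l2_inner F (skew_shift l t (sym_shift k t F))"
      using F by (simp add: l2_inner_commute[of "sym_shift k t F"] l2_inner_skew_shift)
    ultimately show ?thesis using F by (simp add: l2_inner_diff_right)
  qed
  have "2 * l2_inner (Sym t F) (Skew t F) = (\<Sum>k<d. \<Sum>l<d. 2 * l2_inner (sym_shift k t F) (skew_shift l t F))"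
    unfolding Sym_def[abs_def] Skew_def[abs_def] using F
    by (simp add: l2_inner_sum_left l2_inner_sum_right sum_distrib_left)
  also have "\<dots> = (\<Sum>k<d. \<Sum>l<d. if l = k then
      l2_inner F (\<lambda>j. sym_shift k t (skew_shift k t F) j - skew_shift k t (sym_shift k t F) j) else 0)"
    unfolding commutator by (intro sum.cong refl) (simp add: sym_skew_shift_commute l2_inner_def)
  finally show ?thesis
    using F by (simp add: l2_inner_sym_skew_commutator sum_distrib_left)
qed

end

section \<open>The energy identity\<close>

locale weighted_heat = lattice_weight +
  fixes f f' :: "(nat \<Rightarrow> int) \<Rightarrow> real \<Rightarrow> real"
  assumes f_deriv: "\<And>j t. (f j has_real_derivative f' j t) (at t)"
    and f'_cont: "\<And>j. continuous_on UNIV (f' j)"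
    and finite_support: "finite {j. \<exists>t. f j t \<noteq> 0}"
    and f_0: "\<And>j. f j 0 = 0" and f_1: "\<And>j. f j 1 = 0"
begin

definition active :: "(nat \<Rightarrow> int) set" where
  "active = {j. \<exists>t. f j t \<noteq> 0}"

lemma finite_active: "finite active"
  using finite_support by (simp add: active_def)

lemma f_active: "f j t \<noteq> 0 \<Longrightarrow> j \<in> active"
  by (auto simp: active_def)

lemma f'_active:
  assumes "f' j t \<noteq> 0"
  shows "j \<in> active"
proof (rule ccontr)
  assume "j \<notin> active"
  then have "f j = (\<lambda>_. 0)" by (auto simp: active_def)
  then have "f' j t = 0" using f_deriv[of j t] DERIV_unique[OF DERIV_const] by metis
  with assms show False by simp
qed

lemma finsupp_f [simp]: "finsupp (\<lambda>j. f j t)"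
  and finsupp_f' [simp]: "finsupp (\<lambda>j. f' j t)"
  using finite_active f_active f'_active by (auto intro: finsupp_subset)

lemma finsupp_f_shift_plus [simp]: "finsupp (\<lambda>j. f (shift_plus j k) t)"
  and finsupp_f_shift_minus [simp]: "finsupp (\<lambda>j. f (shift_minus j k) t)"
  by (rule finsupp_shift_plus finsupp_shift_minus, rule finsupp_f)+

definition diag :: "(nat \<Rightarrow> int) \<Rightarrow> real \<Rightarrow> real" where
  "diag j t = 2 * real d / h\<^sup>2 - w' j t"

definition Sf :: "real \<Rightarrow> (nat \<Rightarrow> int) \<Rightarrow> real" where
  "Sf t j = diag j t * f j t - Sym t (\<lambda>i. f i t) j / h\<^sup>2"

definition Af :: "real \<Rightarrow> (nat \<Rightarrow> int) \<Rightarrow> real" where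
  "Af t j = f' j t - Skew t (\<lambda>i. f i t) j / h\<^sup>2"

definition Lf :: "(nat \<Rightarrow> int) \<Rightarrow> real \<Rightarrow> real" where
  "Lf j t = f' j t - w' j t * f j t -
     (\<Sum>k<d. exp (- incr k j t) * f (shift_plus j k) t - 2 * f j t
        + exp (incr k (shift_minus j k) t) * f (shift_minus j k) t) / h\<^sup>2"

lemma Lf_eq_Sf_add_Af: "Lf j t = Sf t j + Af t j"
proof -
  have shifts: "exp (- incr k j t) * f (shift_plus j k) t - 2 * f j t
      + exp (incr k (shift_minus j k) t) * f (shift_minus j k) t
      = sym_shift k t (\<lambda>i. f i t) j + skew_shift k t (\<lambda>i. f i t) j - 2 * f j t" for k
    by (simp add: sym_shift_def skew_shift_def algebra_simps
        flip: cosh_minus_sinh cosh_plus_sinh)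
  have "(\<Sum>k<d. exp (- incr k j t) * f (shift_plus j k) t - 2 * f j t
      + exp (incr k (shift_minus j k) t) * f (shift_minus j k) t)
      = (\<Sum>k<d. sym_shift k t (\<lambda>i. f i t) j + skew_shift k t (\<lambda>i. f i t) j - 2 * f j t)"
    by (simp only: shifts)
  also have "\<dots> = Sym t (\<lambda>i. f i t) j + Skew t (\<lambda>i. f i t) j - real d * (2 * f j t)"
    by (simp add: Sym_def Skew_def sum_subtractf sum.distrib)
  finally have sum_eq: "(\<Sum>k<d. exp (- incr k j t) * f (shift_plus j k) t - 2 * f j t
      + exp (incr k (shift_minus j k) t) * f (shift_minus j k) t)
      = Sym t (\<lambda>i. f i t) j + Skew t (\<lambda>i. f i t) j - real d * (2 * f j t)" .
  show ?thesis
    unfolding Lf_def Sf_def Af_def diag_def sum_eq using h_pos by (simp add: field_simps)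
qed

lemma l2_inner_Sf_Af_le: "2 * l2_inner (Sf t) (Af t) \<le> supp_sum (\<lambda>j. (Lf j t)\<^sup>2)"
proof -
  have "finsupp (Sf t)" "finsupp (Af t)"
    unfolding Sf_def[abs_def] Af_def[abs_def] by simp_all
  then have "supp_sum (\<lambda>j. (Lf j t)\<^sup>2) = supp_sum (\<lambda>j. (Sf t j)\<^sup>2) + supp_sum (\<lambda>j. (Af t j)\<^sup>2) + 2 * l2_inner (Sf t) (Af t)"
    unfolding Lf_eq_Sf_add_Af power2_sum l2_inner_def by (simp add: supp_sum_add supp_sum_cmult mult.assoc)
  then show ?thesis using supp_sum_nonneg[of "\<lambda>j. (Sf t j)\<^sup>2"] supp_sum_nonneg[of "\<lambda>j. (Af t j)\<^sup>2"] by simp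
qed

text \<open>Only the increments in direction \<open>e\<^sub>1\<close> (index \<open>0\<close>) depend on \<open>t\<close>, through \<open>\<phi>(t)\<close>.\<close>
definition Sym_t :: "real \<Rightarrow> ((nat \<Rightarrow> int) \<Rightarrow> real) \<Rightarrow> (nat \<Rightarrow> int) \<Rightarrow> real" where
  "Sym_t t F j = incr' t *
     (sinh (incr 0 j t) * F (shift_plus j 0) + sinh (incr 0 (shift_minus j 0) t) * F (shift_minus j 0))"

lemma Sym_f_deriv:
  "((\<lambda>t. Sym t (\<lambda>i. f i t) j) has_real_derivative Sym_t t (\<lambda>i. f i t) j + Sym t (\<lambda>i. f' i t) j) (at t)"
proof -
  have "((\<lambda>t. Sym t (\<lambda>i. f i t) j) has_real_derivative
      (\<Sum>k<d. (cosh (incr k j t) * f' (shift_plus j k) t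
          + (if k = 0 then incr' t * sinh (incr k j t) else 0) * f (shift_plus j k) t)
        + (cosh (incr k (shift_minus j k) t) * f' (shift_minus j k) t
          + (if k = 0 then incr' t * sinh (incr k (shift_minus j k) t) else 0) * f (shift_minus j k) t)))
      (at t)"
    unfolding Sym_def sym_shift_def by (intro DERIV_sum DERIV_add DERIV_mult' cosh_incr_deriv f_deriv)
  also have "(\<Sum>k<d. (cosh (incr k j t) * f' (shift_plus j k) t
          + (if k = 0 then incr' t * sinh (incr k j t) else 0) * f (shift_plus j k) t)
        + (cosh (incr k (shift_minus j k) t) * f' (shift_minus j k) t
          + (if k = 0 then incr' t * sinh (incr k (shift_minus j k) t) else 0) * f (shift_minus j k) t))
      = (\<Sum>k<d. sym_shift k t (\<lambda>i. f' i t) j + (if k = 0 then Sym_t t (\<lambda>i. f i t) j else 0))"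
    by (intro sum.cong refl) (auto simp: sym_shift_def Sym_t_def algebra_simps)
  also have "\<dots> = Sym_t t (\<lambda>i. f i t) j + Sym t (\<lambda>i. f' i t) j"
    using d_pos by (simp add: sum.distrib Sym_def)
  finally show ?thesis .
qed

definition energy :: "real \<Rightarrow> real" where
  "energy t = l2_inner (\<lambda>j. diag j t * f j t) (\<lambda>j. f j t) - l2_inner (\<lambda>j. f j t) (Sym t (\<lambda>j. f j t)) / h\<^sup>2"

definition energy' :: "real \<Rightarrow> real" where
  "energy' t = - l2_inner (\<lambda>j. w'' j t * f j t) (\<lambda>j. f j t) + 2 * l2_inner (\<lambda>j. diag j t * f j t) (\<lambda>j. f' j t)
     - 2 / h\<^sup>2 * l2_inner (Sym t (\<lambda>j. f j t)) (\<lambda>j. f' j t) - l2_inner (Sym_t t (\<lambda>j. f j t)) (\<lambda>j. f j t) / h\<^sup>2"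

lemma energy_deriv: "(energy has_real_derivative energy' t) (at t)"
proof -
  have diag_deriv: "((\<lambda>t. diag j t) has_real_derivative - w'' j t) (at t)" for j
    unfolding diag_def using DERIV_diff[OF DERIV_const w'_deriv] by simp
  have "(energy has_real_derivative
      l2_inner (\<lambda>j. - w'' j t * f j t + f' j t * diag j t) (\<lambda>j. f j t) + l2_inner (\<lambda>j. diag j t * f j t) (\<lambda>j. f' j t)
      - (l2_inner (\<lambda>j. f' j t) (Sym t (\<lambda>j. f j t))
        + l2_inner (\<lambda>j. f j t) (\<lambda>j. Sym_t t (\<lambda>i. f i t) j + Sym t (\<lambda>i. f' i t) j)) / h\<^sup>2) (at t)"
    unfolding energy_def[abs_def] using finite_active f_active
    by (intro DERIV_diff DERIV_cdivide has_real_derivative_l2_inner DERIV_mult diag_deriv f_deriv Sym_f_deriv)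
      auto
  moreover have "l2_inner (\<lambda>j. f j t) (\<lambda>j. Sym_t t (\<lambda>i. f i t) j + Sym t (\<lambda>i. f' i t) j)
      = l2_inner (Sym_t t (\<lambda>j. f j t)) (\<lambda>j. f j t) + l2_inner (Sym t (\<lambda>j. f j t)) (\<lambda>j. f' j t)"
    using l2_inner_Sym[of "\<lambda>j. f' j t" "\<lambda>j. f j t" t]
    by (simp add: l2_inner_def supp_sum_add algebra_simps)
  ultimately show ?thesis
    unfolding energy'_def
    by (simp add: l2_inner_def supp_sum_add supp_sum_diff supp_sum_uminus supp_sum_cmult algebra_simps add_divide_distrib)
qed

definition cross :: "real \<Rightarrow> real" where
  "cross t = supp_sum (\<lambda>j. sinh (incr 0 j t) * f j t * f (shift_plus j 0) t)"

definition mass :: "real \<Rightarrow> real" where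
  "mass t = supp_sum (\<lambda>j. (f j t)\<^sup>2)"

definition weighted_mass :: "real \<Rightarrow> real" where
  "weighted_mass t = (\<Sum>k<d. supp_sum (\<lambda>j. (sinh (grad_w k j t))\<^sup>2 * (f j t)\<^sup>2))"

definition diff_mass :: "real \<Rightarrow> real" where
  "diff_mass t = (\<Sum>k<d. supp_sum (\<lambda>j. ((f (shift_plus j k) t - f (shift_minus j k) t) / 2)\<^sup>2))"

lemma mass_nonneg: "0 \<le> mass t"
  and diff_mass_nonneg: "0 \<le> diff_mass t"
  unfolding mass_def diff_mass_def by (auto intro!: sum_nonneg supp_sum_nonneg)

lemma diag_shift_plus: "diag (shift_plus j k) t - diag j t = - (if k = 0 then incr' t else 0)"
  by (simp add: diag_def w'_def incr'_def coord_shift_plus algebra_simps)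

lemma l2_inner_diag_skew_shift:
  "l2_inner (\<lambda>j. diag j t * f j t) (skew_shift k t (\<lambda>i. f i t)) = - (if k = 0 then incr' t * cross t else 0)"
proof -
  have "l2_inner (\<lambda>j. diag j t * f j t) (skew_shift k t (\<lambda>i. f i t))
      = supp_sum (\<lambda>j. - (diag j t * f j t * sinh (incr k j t) * f (shift_plus j k) t))
      + supp_sum (\<lambda>j. diag (shift_plus j k) t * f (shift_plus j k) t * sinh (incr k j t) * f j t)"
    using supp_sum_shift_plus[of "\<lambda>j. diag j t * f j t * (sinh (incr k (shift_minus j k) t) * f (shift_minus j k) t)" k]
    unfolding l2_inner_def skew_shift_def by (simp add: supp_sum_add supp_sum_diff supp_sum_uminus algebra_simps)
  also have "\<dots> = supp_sum (\<lambda>j. (diag (shift_plus j k) t - diag j t) * (sinh (incr k j t) * f j t * f (shift_plus j k) t))"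
    by (simp add: supp_sum_add[symmetric] algebra_simps)
  also have "\<dots> = - (if k = 0 then incr' t * cross t else 0)"
    unfolding diag_shift_plus by (cases "k = 0") (simp_all add: supp_sum_cmult cross_def supp_sum_uminus mult.assoc)
  finally show ?thesis .
qed

lemma l2_inner_diag_Skew: "l2_inner (\<lambda>j. diag j t * f j t) (Skew t (\<lambda>i. f i t)) = - incr' t * cross t"
  unfolding Skew_def[abs_def] using d_pos
  by (simp add: l2_inner_sum_right l2_inner_diag_skew_shift if_distrib cong: if_cong)

lemma l2_inner_Sym_t: "l2_inner (Sym_t t (\<lambda>i. f i t)) (\<lambda>i. f i t) = 2 * incr' t * cross t"
proof -
  have "l2_inner (Sym_t t (\<lambda>i. f i t)) (\<lambda>i. f i t) = incr' t *
      (cross t + supp_sum (\<lambda>j. sinh (incr 0 (shift_minus j 0) t) * f (shift_minus j 0) t * f j t))"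
    unfolding l2_inner_def Sym_t_def cross_def
    by (simp add: supp_sum_add algebra_simps flip: supp_sum_cmult)
  also have "supp_sum (\<lambda>j. sinh (incr 0 (shift_minus j 0) t) * f (shift_minus j 0) t * f j t) = cross t"
    using supp_sum_shift_plus[of "\<lambda>j. sinh (incr 0 (shift_minus j 0) t) * f (shift_minus j 0) t * f j t" 0]
    by (simp add: cross_def)
  finally show ?thesis by simp
qed

definition lower_order :: "real \<Rightarrow> real" where
  "lower_order t = l2_inner (\<lambda>j. w'' j t * f j t) (\<lambda>j. f j t) + 4 * incr' t / h\<^sup>2 * cross t"

lemma twice_l2_inner_Sf_Af:
  "2 * l2_inner (Sf t) (Af t) =
     energy' t + lower_order t + 4 * sinh (2 * \<delta>) / h ^ 4 * (weighted_mass t + diff_mass t)"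
proof -
  let ?F = "\<lambda>i. f i t"
  have "l2_inner (Sf t) (Af t) = supp_sum (\<lambda>j. diag j t * f j t * f' j t - diag j t * f j t * Skew t ?F j / h\<^sup>2
      - Sym t ?F j * f' j t / h\<^sup>2 + Sym t ?F j * Skew t ?F j / h ^ 4)"
    unfolding l2_inner_def Sf_def Af_def using h_pos
    by (intro arg_cong[where f=supp_sum] ext) (simp add: field_simps power2_eq_square power4_eq_xxxx)
  also have "\<dots> = l2_inner (\<lambda>j. diag j t * f j t) (\<lambda>j. f' j t) - l2_inner (\<lambda>j. diag j t * f j t) (Skew t ?F) / h\<^sup>2
      - l2_inner (Sym t ?F) (\<lambda>j. f' j t) / h\<^sup>2 + l2_inner (Sym t ?F) (Skew t ?F) / h ^ 4"
    unfolding l2_inner_def by (simp add: supp_sum_add supp_sum_diff supp_sum_divide)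
  finally have split: "l2_inner (Sf t) (Af t) = \<dots>" .
  have comm: "l2_inner (Sym t ?F) (Skew t ?F) = 2 * sinh (2 * \<delta>) * (weighted_mass t + diff_mass t)"
    using twice_l2_inner_Sym_Skew[of ?F t] by (simp add: weighted_mass_def diff_mass_def sum.distrib)
  show ?thesis
    unfolding split energy'_def lower_order_def l2_inner_diag_Skew l2_inner_Sym_t comm by (simp add: field_simps)
qed

lemma twice_l2_inner_Sf_Af_le:
  "energy' t + lower_order t + 4 * sinh (2 * \<delta>) / h ^ 4 * (weighted_mass t + diff_mass t)
    \<le> supp_sum (\<lambda>j. (Lf j t)\<^sup>2)"
  using l2_inner_Sf_Af_le[of t] by (simp add: twice_l2_inner_Sf_Af)

definition near_active :: "(nat \<Rightarrow> int) set" where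
  "near_active = active \<union> (\<Union>k<d. (\<lambda>j. shift_minus j k) ` active \<union> (\<lambda>j. shift_plus j k) ` active)"

lemma finite_near_active: "finite near_active"
  using finite_active by (simp add: near_active_def)

lemma shifts_near_active:
  assumes "k < d"
  shows "f (shift_plus j k) t \<noteq> 0 \<Longrightarrow> j \<in> near_active"
    and "f (shift_minus j k) t \<noteq> 0 \<Longrightarrow> j \<in> near_active"
  using assms f_active[of "shift_plus j k" t] f_active[of "shift_minus j k" t]
  unfolding near_active_def
  by (auto intro!: bexI[of _ k] intro: image_eqI[where x="shift_plus j k"] image_eqI[where x="shift_minus j k"])

lemma Lf_near_active: "Lf j t \<noteq> 0 \<Longrightarrow> j \<in> near_active"
  using f_active[of j t] f'_active[of j t] shifts_near_active[of _ j t]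
  by (force simp: Lf_def near_active_def)

lemma supp_sum_Lf_eq_sum: "supp_sum (\<lambda>j. (Lf j t)\<^sup>2) = (\<Sum>j\<in>near_active. (Lf j t)\<^sup>2)"
  by (rule supp_sum_eq_sum[OF finite_near_active]) (use Lf_near_active in fastforce)

lemma finsupp_Lf [simp]: "finsupp (\<lambda>j. Lf j t)"
  by (rule finsupp_subset[OF finite_near_active Lf_near_active])

lemma mass_eq_sum: "mass t = (\<Sum>j\<in>active. (f j t)\<^sup>2)"
  unfolding mass_def by (rule supp_sum_eq_sum[OF finite_active]) (use f_active in fastforce)

lemma diff_mass_eq_sum:
  "diff_mass t = (\<Sum>k<d. \<Sum>j\<in>near_active. ((f (shift_plus j k) t - f (shift_minus j k) t) / 2)\<^sup>2)"
  unfolding diff_mass_def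
proof (intro sum.cong refl supp_sum_eq_sum[OF finite_near_active] subsetI)
  fix k j
  assume "k \<in> {..<d}" "j \<in> {j. ((f (shift_plus j k) t - f (shift_minus j k) t) / 2)\<^sup>2 \<noteq> 0}"
  then show "j \<in> near_active"
    using shifts_near_active[of k j t] by (cases "f (shift_plus j k) t = 0") auto
qed

lemma continuous_on_f': "continuous_on S (f' j)"
  using f'_cont continuous_on_subset by blast

lemma continuous_on_f: "continuous_on S (f j)"
  and continuous_on_w': "continuous_on S (\<lambda>t. w' j t)"
  and continuous_on_incr: "continuous_on S (\<lambda>t. incr k j t)"
  by (auto intro!: continuous_at_imp_continuous_on DERIV_isCont f_deriv w'_deriv incr_deriv)

lemma mass_integrable: "mass integrable_on {0..1}"
  and diff_mass_integrable: "diff_mass integrable_on {0..1}"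
  unfolding mass_eq_sum[abs_def] diff_mass_eq_sum[abs_def]
  by (auto intro!: integrable_continuous_real continuous_intros continuous_on_f)

lemma supp_sum_Lf_integrable: "(\<lambda>t. supp_sum (\<lambda>j. (Lf j t)\<^sup>2)) integrable_on {0..1}"
  unfolding supp_sum_Lf_eq_sum unfolding Lf_def using h_pos
  by (intro integrable_continuous_real continuous_intros continuous_on_f' continuous_on_f
      continuous_on_w' continuous_on_incr) simp

lemma energy'_integral: "(energy' has_integral 0) {0..1}"
proof -
  have "energy 0 = 0" "energy 1 = 0"
    unfolding energy_def l2_inner_def by (simp_all add: f_0 f_1)
  moreover have "(energy' has_integral (energy 1 - energy 0)) {0..1}"
    by (rule fundamental_theorem_of_calculus)
       (auto intro: has_field_derivative_at_within[OF energy_deriv]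
        simp flip: has_real_derivative_iff_has_vector_derivative)
  ultimately show ?thesis by simp
qed

end

section \<open>Absorbing the lower order terms\<close>

lemma sqrt_combination_le:
  fixes s h b Y Q H L :: real
  assumes "0 < s" "0 < h" "0 \<le> b" "0 \<le> Y" "0 \<le> Q" "0 \<le> H"
    and le: "2 * s / h ^ 4 * (b\<^sup>2 * Y + Q) \<le> L"
  shows "(1 / h\<^sup>2) * sqrt s * b * sqrt (H * Y) + (2 / h\<^sup>2) * sqrt s * sqrt (H * Q) \<le> 2 * sqrt (H * L)"
proof -
  define A B where "A = b * sqrt Y" and "B = 2 * sqrt Q"
  have "(A + B)\<^sup>2 \<le> 2 * (A\<^sup>2 + B\<^sup>2)"
    using zero_le_power2[of "A - B"] by (simp add: power2_eq_square algebra_simps)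
  also have "A\<^sup>2 + B\<^sup>2 \<le> 4 * (b\<^sup>2 * Y + Q)"
    using assms by (simp add: A_def B_def power_mult_distrib)
  finally have "H * s / h ^ 4 * (A + B)\<^sup>2 \<le> H * s / h ^ 4 * (8 * (b\<^sup>2 * Y + Q))"
    using assms by (intro mult_left_mono) auto
  also have "\<dots> \<le> 4 * (H * L)"
    using mult_left_mono[OF le, of "4 * H"] assms by (simp add: field_simps)
  finally have "sqrt (H * s / h ^ 4 * (A + B)\<^sup>2) \<le> 2 * sqrt (H * L)"
    using real_sqrt_le_mono by (fastforce simp: real_sqrt_mult)
  moreover have "sqrt (h ^ 4) = h\<^sup>2"
    by (rule real_sqrt_unique) (simp_all flip: power_mult)
  then have "sqrt (H * s / h ^ 4 * (A + B)\<^sup>2)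
      = (1 / h\<^sup>2) * sqrt s * b * sqrt (H * Y) + (2 / h\<^sup>2) * sqrt s * sqrt (H * Q)"
    using assms by (simp add: A_def B_def real_sqrt_mult real_sqrt_divide power_mult_distrib add_divide_distrib
        algebra_simps flip: power_mult)
  ultimately show ?thesis by simp
qed

lemma mult_le_eps_squares:
  fixes a b e :: real
  assumes "0 < e"
  shows "a * b \<le> (e * a\<^sup>2 + b\<^sup>2 / e) / 2"
proof -
  have "0 \<le> (e * a - b)\<^sup>2" by simp
  then have "2 * e * (a * b) \<le> e * e * a\<^sup>2 + b\<^sup>2" by (simp add: power2_eq_square algebra_simps)
  then show ?thesis using assms by (simp add: field_simps power2_eq_square)
qed

lemma abs_sinh_le_endpoints:
  fixes a b :: real
  assumes "0 < a"
  shows "\<bar>sinh (a + b)\<bar> \<le> \<bar>sinh b\<bar> + \<bar>sinh (b + 2 * a)\<bar>"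
proof -
  have "sinh b \<le> sinh (a + b)" "sinh (a + b) \<le> sinh (b + 2 * a)" using assms by simp_all
  then show ?thesis by linarith
qed

lemma le_sinh: "0 \<le> x \<Longrightarrow> x \<le> sinh (x :: real)"
  using real_le_x_sinh by (simp add: sinh_def exp_minus)

lemma abs_coord_le_pnorm:
  assumes "i < d"
  shows "\<bar>h * real_of_int (j i) / R + (if i = 0 then v t else 0)\<bar> \<le> pnorm d h R v j t"
proof -
  have "(h * real_of_int (j i) / R + (if i = 0 then v t else 0))\<^sup>2
      \<le> (\<Sum>i<d. (h * real_of_int (j i) / R + (if i = 0 then v t else 0))\<^sup>2)"
    using assms by (intro member_le_sum) auto
  then have "sqrt ((h * real_of_int (j i) / R + (if i = 0 then v t else 0))\<^sup>2)
      \<le> sqrt (\<Sum>i<d. (h * real_of_int (j i) / R + (if i = 0 then v t else 0))\<^sup>2)"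
    by (rule real_sqrt_le_mono)
  then show ?thesis unfolding pnorm_def real_sqrt_abs .
qed

locale carleman_setting = weighted_heat +
  fixes P1 P2 c\<^sub>\<phi> :: real
  assumes support_annulus: "\<And>j t. f j t \<noteq> 0 \<Longrightarrow>
      j \<in> lat d \<and> 0 \<le> t \<and> t \<le> 1 \<and> 1 \<le> pnorm d h R \<phi> j t \<and> pnorm d h R \<phi> j t \<le> 4"
    and \<phi>'_bound: "\<And>t. 0 \<le> t \<Longrightarrow> t \<le> 1 \<Longrightarrow> \<bar>\<phi>' t\<bar> \<le> P1"
    and \<phi>''_bound: "\<And>t. 0 \<le> t \<Longrightarrow> t \<le> 1 \<Longrightarrow> \<bar>\<phi>'' t\<bar> \<le> P2"
    and c\<^sub>\<phi>_small: "c\<^sub>\<phi> * (2 * (P1\<^sup>2 + 4 * P2) + 32 * (P1 + 1)\<^sup>2) \<le> 1"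
    and \<alpha>_small: "\<alpha> \<le> c\<^sub>\<phi> * (1 / h ^ 4) * sinh (2 * \<alpha> * h\<^sup>2 / R\<^sup>2) * (sinh (2 * \<alpha> * h / (R * sqrt d)))\<^sup>2"
begin

definition \<beta> :: real where
  "\<beta> = 2 * \<alpha> * h / (R * sqrt d)"

lemma P1_nonneg: "0 \<le> P1" and P2_nonneg: "0 \<le> P2"
  using \<phi>'_bound[of 0] \<phi>''_bound[of 0] by simp_all

lemma sinh_2\<delta>_pos: "0 < sinh (2 * \<delta>)"
  using \<delta>_pos by simp

lemma \<beta>_nonneg: "0 \<le> \<beta>"
  using h_pos R_pos \<alpha>_pos by (simp add: \<beta>_def)

text \<open>On the annulus \<open>|y| \<ge> 1\<close>, some coordinate of \<open>y = hj/R + \<phi>(t)e\<^sub>1\<close> has modulus at least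
  \<open>1/\<surd>d\<close>.\<close>
lemma sinh_\<beta>_le:
  assumes "f j t \<noteq> 0"
  shows "(sinh \<beta>)\<^sup>2 \<le> (\<Sum>k<d. (sinh (grad_w k j t))\<^sup>2)"
proof -
  have one: "1 \<le> (\<Sum>i<d. (coord i j t)\<^sup>2)"
    using support_annulus[OF assms] by (simp add: pnorm_eq)
  obtain k where k: "k < d" "1 / real d \<le> (coord k j t)\<^sup>2"
  proof (rule ccontr)
    assume "\<not> thesis"
    then have "(\<Sum>i<d. (coord i j t)\<^sup>2) < (\<Sum>i<d. 1 / real d)"
      using d_pos by (intro sum_strict_mono) (auto intro: that)
    then show False using one d_pos by simp
  qed
  have "1 / sqrt d \<le> \<bar>coord k j t\<bar>"
    using real_sqrt_le_mono[OF k(2)] by (simp add: real_sqrt_divide)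
  then have "\<beta> \<le> \<bar>grad_w k j t\<bar>"
    using h_pos R_pos \<alpha>_pos mult_left_mono[of "1 / sqrt d" "\<bar>coord k j t\<bar>" "2 * \<alpha> * h / R"]
    by (simp add: \<beta>_def grad_w_def abs_mult)
  then have "sinh \<beta> \<le> sinh \<bar>grad_w k j t\<bar>"
    by (simp only: sinh_real_le_iff)
  then have "(sinh \<beta>)\<^sup>2 \<le> (sinh \<bar>grad_w k j t\<bar>)\<^sup>2"
    using \<beta>_nonneg by (intro power_mono) auto
  also have "\<dots> = (sinh (grad_w k j t))\<^sup>2"
    by (simp only: sinh_real_abs power2_abs)
  also have "\<dots> \<le> (\<Sum>k<d. (sinh (grad_w k j t))\<^sup>2)"
    using k(1) by (intro member_le_sum) auto
  finally show ?thesis .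
qed

lemma sinh_\<beta>_mass_le: "(sinh \<beta>)\<^sup>2 * mass t \<le> weighted_mass t"
proof -
  have "(sinh \<beta>)\<^sup>2 * mass t = supp_sum (\<lambda>j. (sinh \<beta>)\<^sup>2 * (f j t)\<^sup>2)"
    by (simp add: mass_def supp_sum_cmult)
  also have "\<dots> \<le> supp_sum (\<lambda>j. \<Sum>k<d. (sinh (grad_w k j t))\<^sup>2 * (f j t)\<^sup>2)"
  proof (rule supp_sum_mono)
    show "finsupp (\<lambda>j. \<Sum>k<d. (sinh (grad_w k j t))\<^sup>2 * (f j t)\<^sup>2)"
      by (intro finsupp_sum) simp_all
    show "(sinh \<beta>)\<^sup>2 * (f j t)\<^sup>2 \<le> (\<Sum>k<d. (sinh (grad_w k j t))\<^sup>2 * (f j t)\<^sup>2)" for j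
      using sinh_\<beta>_le[of j t] by (cases "f j t = 0") (simp_all add: mult_right_mono flip: sum_distrib_right)
  qed simp
  also have "\<dots> = weighted_mass t"
    unfolding weighted_mass_def by (rule supp_sum_sum) auto
  finally show ?thesis .
qed

lemma abs_l2_inner_w''_le: "\<bar>l2_inner (\<lambda>j. w'' j t * f j t) (\<lambda>j. f j t)\<bar> \<le> 2 * \<alpha> * (P1\<^sup>2 + 4 * P2) * mass t"
proof -
  have "\<bar>w'' j t\<bar> * (f j t)\<^sup>2 \<le> 2 * \<alpha> * (P1\<^sup>2 + 4 * P2) * (f j t)\<^sup>2" for j
  proof (cases "f j t = 0")
    case False
    note supp = support_annulus[OF False]
    then have "\<bar>\<phi>' t\<bar> \<le> P1" "\<bar>\<phi>'' t\<bar> \<le> P2" using \<phi>'_bound \<phi>''_bound by auto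
    moreover have "\<bar>coord 0 j t\<bar> \<le> 4"
      using supp abs_coord_le_pnorm[OF d_pos, of h j R \<phi> t] by (simp add: coord_def)
    ultimately have "(\<phi>' t)\<^sup>2 \<le> P1\<^sup>2" "\<bar>coord 0 j t * \<phi>'' t\<bar> \<le> 4 * P2"
      by (auto simp: abs_mult intro: mult_mono simp flip: abs_le_square_iff)
    then have "\<bar>w'' j t\<bar> \<le> 2 * \<alpha> * (P1\<^sup>2 + 4 * P2)"
      unfolding w''_def using \<alpha>_pos abs_triangle_ineq[of "(\<phi>' t)\<^sup>2" "coord 0 j t * \<phi>'' t"]
      by (simp add: abs_mult)
    then show ?thesis by (rule mult_right_mono) simp
  qed simp
  then have "supp_sum (\<lambda>j. \<bar>w'' j t * f j t * f j t\<bar>) \<le> supp_sum (\<lambda>j. 2 * \<alpha> * (P1\<^sup>2 + 4 * P2) * (f j t)\<^sup>2)"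
    by (intro supp_sum_mono) (simp_all add: abs_mult power2_eq_square mult.assoc)
  then show ?thesis
    using abs_supp_sum_le[of "\<lambda>j. w'' j t * f j t * f j t"] by (simp add: l2_inner_def mass_def supp_sum_cmult)
qed

definition weighted_mass0 :: "real \<Rightarrow> real" where
  "weighted_mass0 t = supp_sum (\<lambda>j. (sinh (grad_w 0 j t))\<^sup>2 * (f j t)\<^sup>2)"

lemma weighted_mass0_le: "weighted_mass0 t \<le> weighted_mass t"
  unfolding weighted_mass0_def weighted_mass_def using d_pos
  by (intro member_le_sum) (auto intro: supp_sum_nonneg)

text \<open>\<open>incr 0 j t\<close> is the midpoint of \<open>grad_w 0 j t\<close> and \<open>grad_w 0 (j + e\<^sub>1) t\<close>, so the cross term is
  controlled by the weighted mass in direction \<open>e\<^sub>1\<close>.\<close>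
lemma abs_cross_le:
  assumes e: "0 < e"
  shows "\<bar>cross t\<bar> \<le> e * weighted_mass0 t + mass t / e"
proof -
  let ?s = "\<lambda>j. sinh (grad_w 0 j t)" and ?p = "\<lambda>j. shift_plus j 0"
  have "\<bar>sinh (incr 0 j t) * f j t * f (?p j) t\<bar>
      \<le> e / 2 * ((?s j)\<^sup>2 * (f j t)\<^sup>2) + e / 2 * ((?s (?p j))\<^sup>2 * (f (?p j) t)\<^sup>2)
        + ((f (?p j) t)\<^sup>2 / (2 * e) + (f j t)\<^sup>2 / (2 * e))" for j
  proof -
    have "grad_w 0 (?p j) t = grad_w 0 j t + 2 * \<delta>"
      using incr_shift_plus[of 0 j 0 t] by (simp add: incr_def)
    then have "\<bar>sinh (incr 0 j t)\<bar> \<le> \<bar>?s j\<bar> + \<bar>?s (?p j)\<bar>"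
      using abs_sinh_le_endpoints[OF \<delta>_pos, of "grad_w 0 j t"] by (simp add: incr_def add.commute)
    then have "\<bar>sinh (incr 0 j t)\<bar> * (\<bar>f j t\<bar> * \<bar>f (?p j) t\<bar>)
        \<le> (\<bar>?s j\<bar> + \<bar>?s (?p j)\<bar>) * (\<bar>f j t\<bar> * \<bar>f (?p j) t\<bar>)"
      by (rule mult_right_mono) simp
    then have "\<bar>sinh (incr 0 j t) * f j t * f (?p j) t\<bar>
        \<le> (\<bar>?s j\<bar> * \<bar>f j t\<bar>) * \<bar>f (?p j) t\<bar> + (\<bar>?s (?p j)\<bar> * \<bar>f (?p j) t\<bar>) * \<bar>f j t\<bar>"
      by (simp add: abs_mult algebra_simps)
    also have "\<dots> \<le> (e * (\<bar>?s j\<bar> * \<bar>f j t\<bar>)\<^sup>2 + \<bar>f (?p j) t\<bar>\<^sup>2 / e) / 2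
        + (e * (\<bar>?s (?p j)\<bar> * \<bar>f (?p j) t\<bar>)\<^sup>2 + \<bar>f j t\<bar>\<^sup>2 / e) / 2"
      by (intro add_mono mult_le_eps_squares e)
    finally show ?thesis by (simp add: power_mult_distrib field_simps)
  qed
  then have "\<bar>cross t\<bar> \<le> supp_sum (\<lambda>j. e / 2 * ((?s j)\<^sup>2 * (f j t)\<^sup>2) + e / 2 * ((?s (?p j))\<^sup>2 * (f (?p j) t)\<^sup>2)
      + ((f (?p j) t)\<^sup>2 / (2 * e) + (f j t)\<^sup>2 / (2 * e)))"
    unfolding cross_def
    by (intro order.trans[OF abs_supp_sum_le] supp_sum_mono) simp_all
  also have "\<dots> = e * weighted_mass0 t + mass t / e"
    using supp_sum_shift_plus[of "\<lambda>j. (?s j)\<^sup>2 * (f j t)\<^sup>2" 0] supp_sum_shift_plus[of "\<lambda>j. (f j t)\<^sup>2" 0]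
    by (simp add: weighted_mass0_def mass_def supp_sum_add supp_sum_cmult supp_sum_divide field_simps)
  finally show ?thesis .
qed

lemma abs_incr'_cross_le: "\<bar>incr' t * cross t\<bar> \<le> 2 * \<alpha> * (P1 + 1) * h / R * \<bar>cross t\<bar>"
proof (cases "\<exists>j. f j t \<noteq> 0")
  case True
  then have "\<bar>\<phi>' t\<bar> \<le> P1" using support_annulus \<phi>'_bound by blast
  then have "\<bar>incr' t\<bar> \<le> 2 * \<alpha> * (P1 + 1) * h / R"
    using \<alpha>_pos h_pos R_pos by (simp add: incr'_def abs_mult divide_right_mono mult_left_mono)
  then show ?thesis unfolding abs_mult by (rule mult_right_mono) simp
qed (simp add: cross_def)

lemma abs_cross_term_le:
  "\<bar>4 * incr' t / h\<^sup>2 * cross t\<bar> \<le> sinh (2 * \<delta>) / h ^ 4 * weighted_mass0 t + 32 * \<alpha> * (P1 + 1)\<^sup>2 * mass t"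
proof -
  define b where "b = 2 * \<alpha> * (P1 + 1) * h / R"
  define e where "e = sinh (2 * \<delta>) / (4 * h\<^sup>2 * b)"
  have b_pos: "0 < b" using \<alpha>_pos h_pos R_pos P1_nonneg by (simp add: b_def)
  have e_pos: "0 < e" using sinh_2\<delta>_pos h_pos b_pos by (simp add: e_def)
  have "\<bar>4 * incr' t / h\<^sup>2 * cross t\<bar> = 4 / h\<^sup>2 * \<bar>incr' t * cross t\<bar>"
    by (simp add: abs_mult)
  also have "\<dots> \<le> 4 / h\<^sup>2 * (b * (e * weighted_mass0 t + mass t / e))"
    using abs_incr'_cross_le[of t] abs_cross_le[OF e_pos, of t] b_pos unfolding b_def[symmetric]
    by (intro mult_left_mono) (auto intro: order.trans mult_left_mono)
  also have "\<dots> = 4 * b / h\<^sup>2 * (e * weighted_mass0 t + mass t / e)"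
    by simp
  also have "\<dots> = sinh (2 * \<delta>) / h ^ 4 * weighted_mass0 t + 16 * b\<^sup>2 / sinh (2 * \<delta>) * mass t"
    using h_pos b_pos sinh_2\<delta>_pos by (simp add: e_def field_simps power2_eq_square power4_eq_xxxx)
  also have "16 * b\<^sup>2 / sinh (2 * \<delta>) \<le> 16 * b\<^sup>2 / (2 * \<delta>)"
    using le_sinh[of "2 * \<delta>"] \<delta>_pos by (intro divide_left_mono) auto
  also have "16 * b\<^sup>2 / (2 * \<delta>) = 32 * \<alpha> * (P1 + 1)\<^sup>2"
    using \<alpha>_pos h_pos R_pos by (simp add: b_def \<delta>_def field_simps power2_eq_square)
  finally show ?thesis using mass_nonneg[of t] by (simp add: mult_right_mono)
qed

text \<open>This is where the smallness condition on \<open>\<alpha>\<close> with constant \<open>c\<^sub>\<phi>\<close> enters.\<close>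
lemma \<alpha>_mass_le:
  "\<alpha> * (2 * (P1\<^sup>2 + 4 * P2) + 32 * (P1 + 1)\<^sup>2) * mass t \<le> sinh (2 * \<delta>) / h ^ 4 * weighted_mass t"
proof -
  let ?K = "2 * (P1\<^sup>2 + 4 * P2) + 32 * (P1 + 1)\<^sup>2"
  have "2 * \<alpha> * h\<^sup>2 / R\<^sup>2 = 2 * \<delta>" by (simp add: \<delta>_def)
  then have "\<alpha> \<le> c\<^sub>\<phi> * (sinh (2 * \<delta>) / h ^ 4 * (sinh \<beta>)\<^sup>2)"
    using \<alpha>_small unfolding \<beta>_def[symmetric] by simp
  then have "\<alpha> * ?K * mass t \<le> c\<^sub>\<phi> * (sinh (2 * \<delta>) / h ^ 4 * (sinh \<beta>)\<^sup>2) * ?K * mass t"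
    using P2_nonneg mass_nonneg by (intro mult_right_mono) auto
  also have "\<dots> = (c\<^sub>\<phi> * ?K) * (sinh (2 * \<delta>) / h ^ 4 * ((sinh \<beta>)\<^sup>2 * mass t))"
    by (simp add: algebra_simps)
  also have "\<dots> \<le> 1 * (sinh (2 * \<delta>) / h ^ 4 * ((sinh \<beta>)\<^sup>2 * mass t))"
    using sinh_2\<delta>_pos h_pos mass_nonneg by (intro mult_right_mono c\<^sub>\<phi>_small) simp
  also have "\<dots> \<le> sinh (2 * \<delta>) / h ^ 4 * weighted_mass t"
    unfolding mult_1 using sinh_2\<delta>_pos h_pos by (intro mult_left_mono[OF sinh_\<beta>_mass_le]) simp
  finally show ?thesis .
qed

lemma abs_lower_order_le: "\<bar>lower_order t\<bar> \<le> 2 * sinh (2 * \<delta>) / h ^ 4 * (weighted_mass t + diff_mass t)"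
proof -
  have "\<bar>lower_order t\<bar> \<le> 2 * \<alpha> * (P1\<^sup>2 + 4 * P2) * mass t
      + (sinh (2 * \<delta>) / h ^ 4 * weighted_mass0 t + 32 * \<alpha> * (P1 + 1)\<^sup>2 * mass t)"
    unfolding lower_order_def using abs_l2_inner_w''_le[of t] abs_cross_term_le[of t] by linarith
  also have "\<dots> = \<alpha> * (2 * (P1\<^sup>2 + 4 * P2) + 32 * (P1 + 1)\<^sup>2) * mass t
      + sinh (2 * \<delta>) / h ^ 4 * weighted_mass0 t"
    by (simp add: algebra_simps)
  also have "\<dots> \<le> sinh (2 * \<delta>) / h ^ 4 * weighted_mass t + sinh (2 * \<delta>) / h ^ 4 * weighted_mass t"
    using sinh_2\<delta>_pos h_pos by (intro add_mono \<alpha>_mass_le mult_left_mono weighted_mass0_le) simp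
  also have "\<dots> \<le> 2 * sinh (2 * \<delta>) / h ^ 4 * (weighted_mass t + diff_mass t)"
    using sinh_2\<delta>_pos h_pos diff_mass_nonneg[of t] by (simp add: field_simps)
  finally show ?thesis .
qed

lemma energy'_add_mass_le:
  "energy' t + 2 * sinh (2 * \<delta>) / h ^ 4 * ((sinh \<beta>)\<^sup>2 * mass t + diff_mass t) \<le> supp_sum (\<lambda>j. (Lf j t)\<^sup>2)"
proof -
  have "2 * sinh (2 * \<delta>) / h ^ 4 * ((sinh \<beta>)\<^sup>2 * mass t + diff_mass t)
      \<le> 2 * sinh (2 * \<delta>) / h ^ 4 * (weighted_mass t + diff_mass t)"
    using sinh_2\<delta>_pos h_pos sinh_\<beta>_mass_le[of t] by (intro mult_left_mono) auto
  moreover have "- (2 * sinh (2 * \<delta>) / h ^ 4 * (weighted_mass t + diff_mass t)) \<le> lower_order t"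
    using abs_lower_order_le[of t] by (simp add: abs_le_iff)
  moreover have "4 * sinh (2 * \<delta>) / h ^ 4 * (weighted_mass t + diff_mass t)
      = 2 * (2 * sinh (2 * \<delta>) / h ^ 4 * (weighted_mass t + diff_mass t))"
    by simp
  ultimately show ?thesis
    using twice_l2_inner_Sf_Af_le[of t] by linarith
qed

lemma integrated_estimate:
  "2 * sinh (2 * \<delta>) / h ^ 4 * ((sinh \<beta>)\<^sup>2 * integral {0..1} mass + integral {0..1} diff_mass)
     \<le> integral {0..1} (\<lambda>t. supp_sum (\<lambda>j. (Lf j t)\<^sup>2))"
proof -
  have "((\<lambda>t. energy' t + 2 * sinh (2 * \<delta>) / h ^ 4 * ((sinh \<beta>)\<^sup>2 * mass t + diff_mass t)) has_integral
      (0 + 2 * sinh (2 * \<delta>) / h ^ 4 * ((sinh \<beta>)\<^sup>2 * integral {0..1} mass + integral {0..1} diff_mass))) {0..1}"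
    by (intro has_integral_add energy'_integral has_integral_mult_right integrable_integral
        mass_integrable diff_mass_integrable)
  then show ?thesis
    using has_integral_le[OF _ integrable_integral[OF supp_sum_Lf_integrable] energy'_add_mass_le] by simp
qed

lemma conj_op_eq_Lf: "conj_op d h R \<alpha> \<phi> f j t = Lf j t"
proof -
  define u where "u = (\<lambda>i s. exp (- w i s) * f i s)"
  have "(u j has_real_derivative exp (- w j t) * f' j t + exp (- w j t) * (- w' j t) * f j t) (at t)"
    unfolding u_def by (intro DERIV_mult' DERIV_chain'[OF DERIV_minus[OF w_deriv] DERIV_exp] f_deriv)
  then have deriv_u: "exp (w j t) * deriv (u j) t = f' j t - w' j t * f j t"
    by (simp add: DERIV_imp_deriv algebra_simps flip: exp_add)
  have "exp (w j t) * (u (shift_plus j k) t - 2 * u j t + u (shift_minus j k) t)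
      = exp (- incr k j t) * f (shift_plus j k) t - 2 * f j t
        + exp (incr k (shift_minus j k) t) * f (shift_minus j k) t" if "k \<in> {..<d}" for k
    using that by (simp add: u_def w_shift_plus w_shift_minus algebra_simps flip: exp_add)
  then have "exp (w j t) * dlap d h u j t = (\<Sum>k<d. exp (- incr k j t) * f (shift_plus j k) t - 2 * f j t
        + exp (incr k (shift_minus j k) t) * f (shift_minus j k) t) / h\<^sup>2"
    unfolding dlap_def by (simp add: sum_distrib_left)
  then show ?thesis
    unfolding conj_op_def weight_eq_w[abs_def] Lf_def u_def[symmetric]
    by (simp add: right_diff_distrib deriv_u)
qed

lemma f_notin_lat: "j \<notin> lat d \<Longrightarrow> f j t = 0"
  using support_annulus by blast

lemma Lf_notin_lat:
  assumes "j \<notin> lat d"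
  shows "Lf j t = 0"
proof -
  have "f' j t = 0" using f'_active[of j t] assms f_notin_lat by (auto simp: active_def)
  then show ?thesis
    using assms by (simp add: Lf_def f_notin_lat shift_plus_notin_lat shift_minus_notin_lat)
qed

lemma L2l2_f: "L2l2 d h f = sqrt (h ^ d * integral {0..1} mass)"
  unfolding L2l2_def mass_def using f_notin_lat
  by (subst infsum_eq_supp_sum) (auto intro: ccontr)

lemma L2l2_conj_op: "L2l2 d h (conj_op d h R \<alpha> \<phi> f) = sqrt (h ^ d * integral {0..1} (\<lambda>t. supp_sum (\<lambda>j. (Lf j t)\<^sup>2)))"
  unfolding L2l2_def conj_op_eq_Lf using Lf_notin_lat
  by (subst infsum_eq_supp_sum) (auto intro: ccontr)

lemma cgrad_f: "cgrad d h f = sqrt (h ^ d * integral {0..1} diff_mass)"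
proof -
  have "(\<Sum>\<^sub>\<infinity>j\<in>lat d. \<Sum>k<d. ((f (shift_plus j k) t - f (shift_minus j k) t) / 2)\<^sup>2) = diff_mass t" for t
  proof -
    have "(\<Sum>k<d. ((f (shift_plus j k) t - f (shift_minus j k) t) / 2)\<^sup>2) = 0" if "j \<notin> lat d" for j
      using that by (simp add: f_notin_lat shift_plus_notin_lat shift_minus_notin_lat)
    then show ?thesis
      unfolding diff_mass_def by (subst infsum_eq_supp_sum) (auto intro: finsupp_sum supp_sum_sum ccontr)
  qed
  then show ?thesis by (simp add: cgrad_def)
qed

lemma carleman_estimate:
  "(1 / h\<^sup>2) * sqrt (sinh (2 * \<alpha> * h\<^sup>2 / R\<^sup>2)) * sinh (2 * \<alpha> * h / (R * sqrt d)) * L2l2 d h f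
   + (2 / h\<^sup>2) * sqrt (sinh (2 * \<alpha> * h\<^sup>2 / R\<^sup>2)) * cgrad d h f
   \<le> 2 * L2l2 d h (conj_op d h R \<alpha> \<phi> f)"
proof -
  have "2 * \<alpha> * h\<^sup>2 / R\<^sup>2 = 2 * \<delta>" by (simp add: \<delta>_def)
  moreover have "0 \<le> sinh \<beta>" "0 \<le> integral {0..1} mass" "0 \<le> integral {0..1} diff_mass"
    using \<beta>_nonneg mass_nonneg diff_mass_nonneg mass_integrable diff_mass_integrable
    by (simp_all add: integral_nonneg)
  ultimately show ?thesis
    unfolding L2l2_f cgrad_f L2l2_conj_op \<beta>_def[symmetric]
    using sqrt_combination_le[OF sinh_2\<delta>_pos h_pos _ _ _ _ integrated_estimate] h_pos
    by simp
qed

end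

lemma finite_lattice_box: "finite {j :: nat \<Rightarrow> int. j \<in> lat d \<and> (\<forall>i<d. \<bar>j i\<bar> \<le> N)}"
proof -
  have "{j. j \<in> lat d \<and> (\<forall>i<d. \<bar>j i\<bar> \<le> N)} \<subseteq> (\<lambda>g i. if i < d then g i else 0) ` PiE {..<d} (\<lambda>_. {-N..N})"
  proof
    fix j :: "nat \<Rightarrow> int"
    assume j: "j \<in> {j. j \<in> lat d \<and> (\<forall>i<d. \<bar>j i\<bar> \<le> N)}"
    show "j \<in> (\<lambda>g i. if i < d then g i else 0) ` PiE {..<d} (\<lambda>_. {-N..N})"
    proof (rule image_eqI[where x="restrict j {..<d}"])
      show "j = (\<lambda>i. if i < d then restrict j {..<d} i else 0)"
        using j by (auto simp: fun_eq_iff lat_def)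
      show "restrict j {..<d} \<in> PiE {..<d} (\<lambda>_. {-N..N})"
        using j by (auto simp: abs_le_iff)
    qed
  qed
  then show ?thesis by (rule finite_subset) (simp add: finite_PiE)
qed

lemma finite_lattice_support:
  assumes "0 < h" "0 < R" and bounded: "\<And>t. t \<in> {0..1} \<Longrightarrow> \<bar>v t\<bar> \<le> M"
    and support: "\<And>j t. f j t \<noteq> 0 \<Longrightarrow> j \<in> lat d \<and> t \<in> {0..1} \<and> pnorm d h R v j t \<le> 4"
  shows "finite {j. \<exists>t. f j t \<noteq> 0}"
proof (rule finite_subset[OF _ finite_lattice_box[of d "\<lceil>(4 + M) * R / h\<rceil>"]], safe)
  fix j t
  assume "f j t \<noteq> 0"
  note supp = support[OF this]
  then show "j \<in> lat d" by simp
  fix i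
  assume "i < d"
  then have "\<bar>h * real_of_int (j i) / R + (if i = 0 then v t else 0)\<bar> \<le> 4"
    using abs_coord_le_pnorm[of i d h j R v t] supp by linarith
  moreover have "\<bar>if i = 0 then v t else 0\<bar> \<le> M"
    using bounded[of t] bounded[of 0] supp by auto
  ultimately have "h * \<bar>real_of_int (j i)\<bar> / R \<le> 4 + M"
    using assms by (simp add: abs_mult)
  then have "\<bar>real_of_int (j i)\<bar> \<le> (4 + M) * R / h"
    using assms by (simp add: field_simps)
  then have "real_of_int \<bar>j i\<bar> \<le> real_of_int \<lceil>(4 + M) * R / h\<rceil>"
    using le_of_int_ceiling[of "(4 + M) * R / h"] by linarith
  then show "\<bar>j i\<bar> \<le> \<lceil>(4 + M) * R / h\<rceil>"
    by (simp only: of_int_le_iff)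
qed

lemma abs_le_Sup_abs:
  fixes g :: "real \<Rightarrow> real"
  assumes "continuous_on {0..1} g" "t \<in> {0..1}"
  shows "\<bar>g t\<bar> \<le> Sup ((\<lambda>t. \<bar>g t\<bar>) ` {0..1})"
proof (rule cSup_upper)
  show "\<bar>g t\<bar> \<in> (\<lambda>t. \<bar>g t\<bar>) ` {0..1}" using assms(2) by simp
  have "compact ((\<lambda>t. \<bar>g t\<bar>) ` {0..1})"
    by (intro compact_continuous_image continuous_on_rabs assms(1)) simp
  then show "bdd_above ((\<lambda>t. \<bar>g t\<bar>) ` {0..1})"
    by (intro bounded_imp_bdd_above compact_imp_bounded)
qed

lemma smooth_fun_deriv:
  "smooth_fun g \<Longrightarrow> ((deriv ^^ n) g has_real_derivative (deriv ^^ Suc n) g x) (at x)"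
  by (simp add: smooth_fun_def DERIV_deriv_iff_real_differentiable)

definition carleman_const :: "real \<Rightarrow> real \<Rightarrow> real" where
  "carleman_const P1 P2 = 1 / (1 + 2 * (P1\<^sup>2 + 4 * \<bar>P2\<bar>) + 32 * (\<bar>P1\<bar> + 1)\<^sup>2)"

lemma carleman_const_pos: "0 < carleman_const P1 P2"
  by (simp add: carleman_const_def add_pos_nonneg)

lemma carleman_const_small:
  "0 \<le> P1 \<Longrightarrow> 0 \<le> P2 \<Longrightarrow> carleman_const P1 P2 * (2 * (P1\<^sup>2 + 4 * P2) + 32 * (P1 + 1)\<^sup>2) \<le> 1"
proof -
  assume "0 \<le> P1" "0 \<le> P2"
  moreover define K where "K = 2 * (P1\<^sup>2 + 4 * P2) + 32 * (P1 + 1)\<^sup>2"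
  ultimately have "0 \<le> K" "carleman_const P1 P2 = 1 / (1 + K)"
    by (simp_all add: carleman_const_def)
  then show ?thesis unfolding K_def[symmetric] by simp
qed

lemma carleman_estimate_smooth:
  fixes \<phi> :: "real \<Rightarrow> real" and f :: "(nat \<Rightarrow> int) \<Rightarrow> real \<Rightarrow> real"
  defines "P1 \<equiv> Sup ((\<lambda>t. \<bar>deriv \<phi> t\<bar>) ` {0..1})"
    and "P2 \<equiv> Sup ((\<lambda>t. \<bar>deriv (deriv \<phi>) t\<bar>) ` {0..1})"
  assumes "1 \<le> d" "smooth_fun \<phi>" "0 < h" "1 \<le> R" "0 < \<alpha>"
    and \<alpha>_small: "\<alpha> \<le> carleman_const P1 P2 * (1 / h ^ 4) * sinh (2 * \<alpha> * h\<^sup>2 / R\<^sup>2)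
        * (sinh (2 * \<alpha> * h / (R * sqrt d)))\<^sup>2"
    and f_C1: "\<forall>j. \<exists>f'. continuous_on UNIV f' \<and> (\<forall>t. (f j has_real_derivative f' t) (at t))"
    and "0 < a" "b < 1"
    and support: "\<forall>j t. f j t \<noteq> 0 \<longrightarrow>
        j \<in> lat d \<and> a \<le> t \<and> t \<le> b \<and> 1 \<le> pnorm d h R \<phi> j t \<and> pnorm d h R \<phi> j t \<le> 4"
  shows "(1 / h\<^sup>2) * sqrt (sinh (2 * \<alpha> * h\<^sup>2 / R\<^sup>2)) * sinh (2 * \<alpha> * h / (R * sqrt d)) * L2l2 d h f
      + (2 / h\<^sup>2) * sqrt (sinh (2 * \<alpha> * h\<^sup>2 / R\<^sup>2)) * cgrad d h f
    \<le> 2 * L2l2 d h (conj_op d h R \<alpha> \<phi> f)"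
proof -
  obtain f' where f'_cont: "\<And>j. continuous_on UNIV (f' j)"
    and f_deriv: "\<And>j t. (f j has_real_derivative f' j t) (at t)"
    using f_C1 by metis
  have deriv: "((deriv ^^ n) \<phi> has_real_derivative (deriv ^^ Suc n) \<phi> t) (at t)" for n t
    using smooth_fun_deriv[OF \<open>smooth_fun \<phi>\<close>] .
  have bound: "\<bar>(deriv ^^ n) \<phi> t\<bar> \<le> Sup ((\<lambda>t. \<bar>(deriv ^^ n) \<phi> t\<bar>) ` {0..1})" if "t \<in> {0..1}" for n t
    by (intro abs_le_Sup_abs that continuous_at_imp_continuous_on ballI DERIV_isCont[OF deriv])
  have P1: "\<bar>deriv \<phi> t\<bar> \<le> P1" and P2: "\<bar>deriv (deriv \<phi>) t\<bar> \<le> P2" if "0 \<le> t" "t \<le> 1" for t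
    using bound[of t 1] bound[of t 2] that by (simp_all add: P1_def P2_def numeral_2_eq_2)
  have support': "j \<in> lat d \<and> 0 \<le> t \<and> t \<le> 1 \<and> 1 \<le> pnorm d h R \<phi> j t \<and> pnorm d h R \<phi> j t \<le> 4"
    if "f j t \<noteq> 0" for j t
    using support that \<open>0 < a\<close> \<open>b < 1\<close> by force
  have f_0: "f j 0 = 0" for j using support \<open>0 < a\<close> by force
  have f_1: "f j 1 = 0" for j using support \<open>b < 1\<close> by force
  have finite_support: "finite {j. \<exists>t. f j t \<noteq> 0}"
  proof (rule finite_lattice_support)
    show "0 < h" "0 < R" using \<open>0 < h\<close> \<open>1 \<le> R\<close> by simp_all
    show "\<bar>\<phi> t\<bar> \<le> Sup ((\<lambda>t. \<bar>\<phi> t\<bar>) ` {0..1})" if "t \<in> {0..1}" for t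
      using bound[OF that, of 0] by simp
    show "j \<in> lat d \<and> t \<in> {0..1} \<and> pnorm d h R \<phi> j t \<le> 4" if "f j t \<noteq> 0" for j t
      using support'[OF that] by simp
  qed
  have c_small: "carleman_const P1 P2 * (2 * (P1\<^sup>2 + 4 * P2) + 32 * (P1 + 1)\<^sup>2) \<le> 1"
    using P1[of 0] P2[of 0] by (intro carleman_const_small) auto
  have \<phi>_derivs: "(\<phi> has_real_derivative deriv \<phi> t) (at t)"
    "(deriv \<phi> has_real_derivative deriv (deriv \<phi>) t) (at t)" for t
    using deriv[of 0 t] deriv[of 1 t] by simp_all
  interpret carleman_setting d h R \<alpha> \<phi> "deriv \<phi>" "deriv (deriv \<phi>)" f f' P1 P2 "carleman_const P1 P2"
    by unfold_locales (use assms f_deriv f'_cont f_0 f_1 finite_support support' P1 P2 c_small \<phi>_derivs in auto)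
  show ?thesis by (rule carleman_estimate)
qed

theorem theorem4p1:
  shows "\<exists>\<epsilon>>0. \<forall>d::nat. d \<ge> 1 \<longrightarrow>
    (\<exists>cfun :: real \<Rightarrow> real \<Rightarrow> real. (\<forall>a b. cfun a b > 0) \<and>
     (\<forall>vphi :: real \<Rightarrow> real.
        smooth_fun vphi \<and> (\<forall>t\<in>{0..1}. vphi t \<ge> 0) \<and>
        (\<exists>a b. 0 < a \<and> a \<le> b \<and> b < 1 \<and> (\<forall>t. vphi t \<noteq> 0 \<longrightarrow> a \<le> t \<and> t \<le> b))
      \<longrightarrow>
      (let c\<^sub>\<phi> = cfun (Sup ((\<lambda>t. \<bar>deriv vphi t\<bar>) ` {0..1}))
                        (Sup ((\<lambda>t. \<bar>deriv (deriv vphi) t\<bar>) ` {0..1}))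
       in \<exists>c>0. \<exists>C'>0. \<exists>h0>0. \<exists>C>1.
          \<forall>h R \<alpha> (f :: (nat \<Rightarrow> int) \<Rightarrow> real \<Rightarrow> real).
            0 < h \<and> h < h0 \<and> R \<ge> 1 \<and> \<alpha> > 0 \<and> h / R < \<epsilon> / sqrt d \<and>
            \<alpha> \<le> c\<^sub>\<phi> * (1 / h ^ 4) * sinh (2 * \<alpha> * h\<^sup>2 / R\<^sup>2)
                   * (sinh (2 * \<alpha> * h / (R * sqrt d)))\<^sup>2 \<and>
            ((\<alpha> * h / R \<le> 1 / 10 \<and> \<alpha> \<ge> c * R\<^sup>2) \<or>
             (\<alpha> * h / R \<ge> sqrt d / 2 \<and>
              1 \<le> C' * (1 / (R * h)) * exp ((2 - \<epsilon>) * \<alpha> * h / (R * sqrt d)))) \<and>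
            (\<forall>j. \<exists>f'. continuous_on UNIV f' \<and> (\<forall>t. (f j has_real_derivative f' t) (at t))) \<and>
            (\<exists>a b. 0 < a \<and> a \<le> b \<and> b < 1 \<and>
               (\<forall>j t. f j t \<noteq> 0 \<longrightarrow> j \<in> lat d \<and> a \<le> t \<and> t \<le> b \<and>
                   1 \<le> pnorm d h R vphi j t \<and> pnorm d h R vphi j t \<le> 4))
          \<longrightarrow>
            (1 / h\<^sup>2) * sqrt (sinh (2 * \<alpha> * h\<^sup>2 / R\<^sup>2)) * sinh (2 * \<alpha> * h / (R * sqrt d))
                * L2l2 d h f
            + (2 / h\<^sup>2) * sqrt (sinh (2 * \<alpha> * h\<^sup>2 / R\<^sup>2)) * cgrad d h f
            \<le> C * L2l2 d h (conj_op d h R \<alpha> vphi f))))"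
proof -
  text \<open>The constants \<open>c\<close>, \<open>C'\<close>, \<open>h\<^sub>0\<close>, \<open>\<epsilon>\<close> and the case distinction on \<open>\<alpha>h/R\<close> play no role:
    the estimate holds with \<open>C = 2\<close> under the smallness condition on \<open>\<alpha>\<close> alone.\<close>
  show ?thesis
    unfolding Let_def
    apply (rule exI[of _ 1], rule conjI, simp)
    apply (intro allI impI exI[of _ carleman_const] conjI carleman_const_pos)
    apply (rule exI[of _ 1], rule conjI, simp, rule exI[of _ 1], rule conjI, simp,
        rule exI[of _ 1], rule conjI, simp)
    apply (rule exI[of _ 2], rule conjI, simp)
    using carleman_estimate_smooth by blast
qed
end
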